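(* Let $f:\mathbb{R}^n\to(-\infty,+\infty]$ be a proper closed convex function with $S=\arg\min f$ nonempty, let $\bar x\in S$, and let $\mathcal{M}$ be a $C^1$-smooth embedded submanifold of $\mathbb{R}^n$ containing $\bar x$ (with induced metric). Suppose $f$ is $C^1$-partly smooth around $\bar x$ relative to $\mathcal{M}$ with $0\in\operatorname{ri}\partial f(\bar x)$. Then the following are equivalent: (i) there exist $\epsilon,\mu>0$ such that $\mu\,\operatorname{dist}(x,S)\le\operatorname{dist}(0,\partial f(x))$ for all $x\in B_\epsilon(\bar x)$; (ii) there exist $\epsilon,\mu>0$ such that $\mu\,\operatorname{dist}(x,S\cap\mathcal{M})\le\|\nabla_{\mathcal{M}}f(x)\|$ for all $x\in B_\epsilon(\bar x)\cap\mathcal{M}$.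
   Context: Partial smoothness: $f$ is partly smooth at a point $x\in\mathcal M$ relative to a $C^p$ manifold $\mathcal{M}$ (for all subgradients) if: (Regularity) $\hat\partial f(z)=\partial f(z)\neq\varnothing$ for all $z\in\mathcal{M}$ near $x$; (Restricted smoothness) $f|_{\mathcal{M}}$ is $C^p$-smooth around $x$; (Sharpness) $\operatorname{par}\partial f(x)$ (the subspace parallel to the affine hull of $\partial f(x)$) equals the normal space $N_x\mathcal{M}$; (Inner semicontinuity) for every $y\in\partial f(x)$ and every sequence $x_r\to x$ in $\mathcal{M}$ there exist $y_r\in\partial f(x_r)$ with $y_r\to y$. "$C^1$-partly smooth around $\bar x$ relative to $\mathcal{M}$" means this holds with $p=1$ at every point of $\mathcal M$ near $\bar x$. $\nabla_{\mathcal M}f(x)$ is the Riemannian gradient of $f|_{\mathcal M}$, i.e. $P_{T_x\mathcal M}\nabla\tilde f(x)$ for a local smooth extension $\tilde f$. $\operatorname{dist}(0,\emptyset)=+\infty$. *)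

theory Defs
  imports "HOL-Analysis.Analysis" "HOL-Library.Extended_Real"
begin

text \<open>Functions f : R^n -> (-inf,+inf] are modelled as 'a => ereal with 'a a Euclidean space.\<close>

definition proper_fun :: "('a \<Rightarrow> ereal) \<Rightarrow> bool" where
  "proper_fun f \<longleftrightarrow> (\<forall>x. f x \<noteq> -\<infinity>) \<and> (\<exists>x. f x \<noteq> \<infinity>)"

definition epigraph :: "('a \<Rightarrow> ereal) \<Rightarrow> ('a \<times> real) set" where
  "epigraph f = {(x, t). f x \<le> ereal t}"

definition closed_fun :: "('a::topological_space \<Rightarrow> ereal) \<Rightarrow> bool" where
  "closed_fun f \<longleftrightarrow> closed (epigraph f)"

definition convex_fun :: "('a::real_vector \<Rightarrow> ereal) \<Rightarrow> bool" where
  "convex_fun f \<longleftrightarrow> convex (epigraph f)"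

definition argmin_set :: "('a \<Rightarrow> ereal) \<Rightarrow> 'a set" where
  "argmin_set f = {x. \<forall>y. f x \<le> f y}"

definition frechet_subdiff :: "('a::euclidean_space \<Rightarrow> ereal) \<Rightarrow> 'a \<Rightarrow> 'a set" where
  "frechet_subdiff f x = {v. \<bar>f x\<bar> \<noteq> \<infinity> \<and>
     (\<forall>e>0. \<exists>d>0. \<forall>y. norm (y - x) < d \<longrightarrow>
        f y \<ge> f x + ereal (v \<bullet> (y - x) - e * norm (y - x)))}"

definition subdiff :: "('a::euclidean_space \<Rightarrow> ereal) \<Rightarrow> 'a \<Rightarrow> 'a set" where
  "subdiff f x = {v. \<bar>f x\<bar> \<noteq> \<infinity> \<and>
     (\<exists>xs vs. xs \<longlonglongrightarrow> x \<and> (\<lambda>k. f (xs k)) \<longlonglongrightarrow> f x \<and>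
        (\<forall>k. vs k \<in> frechet_subdiff f (xs k)) \<and> vs \<longlonglongrightarrow> v)}"

text \<open>C^1 embedded submanifold of R^n: locally the zero set of a C^1 map
  whose derivative is surjective onto a fixed linear subspace L (i.e. a submersion onto R^k).\<close>
definition C1_submanifold :: "'a::euclidean_space set \<Rightarrow> bool" where
  "C1_submanifold M \<longleftrightarrow> (\<forall>z\<in>M. \<exists>U L (F::'a \<Rightarrow> 'a) (F'::'a \<Rightarrow> 'a \<Rightarrow>\<^sub>L 'a).
     open U \<and> z \<in> U \<and> subspace L \<and>
     (\<forall>y\<in>U. F y \<in> L \<and> (F has_derivative blinfun_apply (F' y)) (at y) \<and>
             range (blinfun_apply (F' y)) = L) \<and>
     continuous_on U F' \<and> M \<inter> U = {y\<in>U. F y = 0})"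

definition tangent_space :: "'a::euclidean_space set \<Rightarrow> 'a \<Rightarrow> 'a set" where
  "tangent_space M x = {v. \<exists>(\<gamma>::real \<Rightarrow> 'a) e. e > 0 \<and> \<gamma> 0 = x \<and>
     (\<forall>t. \<bar>t\<bar> < e \<longrightarrow> \<gamma> t \<in> M) \<and> (\<gamma> has_vector_derivative v) (at 0)}"

definition normal_space :: "'a::euclidean_space set \<Rightarrow> 'a \<Rightarrow> 'a set" where
  "normal_space M x = {w. \<forall>v\<in>tangent_space M x. w \<bullet> v = 0}"

definition par :: "'a::real_vector set \<Rightarrow> 'a set" where
  "par C = span {a - b | a b. a \<in> C \<and> b \<in> C}"

definition C1_on_with_grad :: "'a set \<Rightarrow> ('a::euclidean_space \<Rightarrow> real) \<Rightarrow> ('a \<Rightarrow> 'a) \<Rightarrow> bool" where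
  "C1_on_with_grad U g g' \<longleftrightarrow>
     (\<forall>y\<in>U. (g has_derivative (\<lambda>h. g' y \<bullet> h)) (at y)) \<and> continuous_on U g'"

definition local_smooth_ext ::
  "('a::euclidean_space \<Rightarrow> ereal) \<Rightarrow> 'a set \<Rightarrow> 'a \<Rightarrow> 'a set \<Rightarrow> ('a \<Rightarrow> real) \<Rightarrow> ('a \<Rightarrow> 'a) \<Rightarrow> bool" where
  "local_smooth_ext f M x U g g' \<longleftrightarrow> open U \<and> x \<in> U \<and> C1_on_with_grad U g g' \<and>
     (\<forall>y\<in>M \<inter> U. f y = ereal (g y))"

definition restricted_C1 :: "('a::euclidean_space \<Rightarrow> ereal) \<Rightarrow> 'a set \<Rightarrow> 'a \<Rightarrow> bool" where
  "restricted_C1 f M x \<longleftrightarrow> (\<exists>U g g'. local_smooth_ext f M x U g g')"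

definition riem_grad :: "('a::euclidean_space \<Rightarrow> ereal) \<Rightarrow> 'a set \<Rightarrow> 'a \<Rightarrow> 'a" where
  "riem_grad f M x = (SOME w. \<exists>U g g'. local_smooth_ext f M x U g g' \<and>
       w = closest_point (tangent_space M x) (g' x))"

definition partly_smooth_at :: "('a::euclidean_space \<Rightarrow> ereal) \<Rightarrow> 'a set \<Rightarrow> 'a \<Rightarrow> bool" where
  "partly_smooth_at f M x \<longleftrightarrow> x \<in> M \<and>
     (\<exists>r>0. \<forall>z\<in>M. dist z x < r \<longrightarrow> frechet_subdiff f z = subdiff f z \<and> subdiff f z \<noteq> {}) \<and>
     restricted_C1 f M x \<and>
     par (subdiff f x) = normal_space M x \<and>
     (\<forall>y\<in>subdiff f x. \<forall>xs. (\<forall>r. xs r \<in> M) \<and> xs \<longlonglongrightarrow> x \<longrightarrow>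
        (\<exists>ys. (\<forall>\<^sub>F r in sequentially. ys r \<in> subdiff f (xs r)) \<and> ys \<longlonglongrightarrow> y))"

definition C1_partly_smooth_around :: "('a::euclidean_space \<Rightarrow> ereal) \<Rightarrow> 'a set \<Rightarrow> 'a \<Rightarrow> bool" where
  "C1_partly_smooth_around f M xb \<longleftrightarrow>
     (\<exists>e>0. \<forall>z\<in>M. dist z xb < e \<longrightarrow> partly_smooth_at f M z)"

end

(*
  Since f is convex, its limiting subdifferential is the subdifferential of convex analysis.
  Partial smoothness together with 0 in ri of the subdifferential at xb gives, by a compactness
  argument combining inner semicontinuity with sharpness, a uniform radius r: for z in M near xb,
  every vector grad_M f(z) + v with v normal at z and |v| <= r is a subgradient at z. In particular
  grad_M f(z) is a subgradient, and for x off M its nearest point z on M satisfies the linear growth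
  f x >= f z + r |x - z|, so S lies in M near xb; hence (i) restricts to (ii). Conversely, (ii)
  yields quadratic growth of f along M (minimize g + mu |. - x|^2 over small balls of M and apply
  (ii) at the minimizer), the linear growth off M extends it to a neighbourhood of xb, and for a
  convex function quadratic growth of f implies the error bound (i) via the subgradient inequality.
*)

theory Submission
  imports Defs
begin

section \<open>Subdifferentials of convex functions\<close>

definition convex_subdiff :: "('a::euclidean_space \<Rightarrow> ereal) \<Rightarrow> 'a \<Rightarrow> 'a set" where
  "convex_subdiff f x = {v. \<bar>f x\<bar> \<noteq> \<infinity> \<and> (\<forall>y. f x + ereal (v \<bullet> (y - x)) \<le> f y)}"

lemma convex_funD:
  assumes "convex_fun f" "f x \<le> ereal a" "f y \<le> ereal b" "0 \<le> t" "t \<le> 1"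
  shows "f ((1 - t) *\<^sub>R x + t *\<^sub>R y) \<le> ereal ((1 - t) * a + t * b)"
proof -
  have "(x, a) \<in> epigraph f" "(y, b) \<in> epigraph f"
    using assms by (auto simp: epigraph_def)
  then have "(1 - t) *\<^sub>R (x, a) + t *\<^sub>R (y, b) \<in> epigraph f"
    using assms(1,4,5) unfolding convex_fun_def by (intro convexD) auto
  then show ?thesis by (simp add: epigraph_def)
qed

lemma convex_subdiff_subset_frechet_subdiff: "convex_subdiff f x \<subseteq> frechet_subdiff f x"
proof
  fix v assume v: "v \<in> convex_subdiff f x"
  have "f x + ereal (v \<bullet> (y - x) - e * norm (y - x)) \<le> f y" if "e > 0" for e y
  proof -
    have "f x + ereal (v \<bullet> (y - x) - e * norm (y - x)) \<le> f x + ereal (v \<bullet> (y - x))"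
      using that by (intro add_left_mono) auto
    also have "\<dots> \<le> f y" using v by (simp add: convex_subdiff_def)
    finally show ?thesis .
  qed
  then show "v \<in> frechet_subdiff f x"
    using v unfolding frechet_subdiff_def convex_subdiff_def by (auto intro: exI[of _ 1])
qed

text \<open>Along the segment from \<open>x\<close> to \<open>y\<close> the Frechet inequality at \<open>x\<close> and convexity give
  \<open>t (v \<bullet> (y - x) - e \<parallel>y - x\<parallel>) \<le> t (f y - f x)\<close> for all small \<open>t > 0\<close>.\<close>
lemma frechet_subgradient_inequality_approx:
  assumes cf: "convex_fun f" and v: "v \<in> frechet_subdiff f x"
    and a: "f x = ereal a" and b: "f y = ereal b" and e: "e > 0"
  shows "a + v \<bullet> (y - x) \<le> b + e"
proof -
  have np: "norm (y - x) + 1 > 0" by (simp add: add_nonneg_pos)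
  define e' where "e' = e / (norm (y - x) + 1)"
  have e': "e' > 0" "e' * norm (y - x) \<le> e"
    using e np by (auto simp: e'_def field_simps)
  obtain d where d: "d > 0"
    and fre: "\<And>z. norm (z - x) < d \<Longrightarrow> f x + ereal (v \<bullet> (z - x) - e' * norm (z - x)) \<le> f z"
    using v e' unfolding frechet_subdiff_def by blast
  define t where "t = min 1 (d / (2 * (norm (y - x) + 1)))"
  have t: "0 < t" "t \<le> 1" using d np by (auto simp: t_def)
  define z where "z = (1 - t) *\<^sub>R x + t *\<^sub>R y"
  have zx: "z - x = t *\<^sub>R (y - x)" by (simp add: z_def algebra_simps)
  have "t * norm (y - x) \<le> d / (2 * (norm (y - x) + 1)) * (norm (y - x) + 1)"
    by (intro mult_mono) (auto simp: t_def d less_imp_le)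
  also have "\<dots> = d / 2" using np by (simp add: field_simps)
  also have "\<dots> < d" using d by simp
  finally have "norm (z - x) < d" using t by (simp add: zx)
  from order_trans[OF fre[OF this] convex_funD[OF cf, of x a y b t, folded z_def]]
  have "a + t * (v \<bullet> (y - x)) - e' * (t * norm (y - x)) \<le> (1 - t) * a + t * b"
    using a b t by (simp add: zx)
  then have "t * (a + v \<bullet> (y - x)) \<le> t * (b + e' * norm (y - x))"
    by (simp add: algebra_simps)
  then show ?thesis using t e' by simp
qed

lemma frechet_subdiff_subset_convex_subdiff:
  assumes cf: "convex_fun f" and pf: "proper_fun f"
  shows "frechet_subdiff f x \<subseteq> convex_subdiff f x"
proof
  fix v assume v: "v \<in> frechet_subdiff f x"
  have fx: "\<bar>f x\<bar> \<noteq> \<infinity>" using v by (simp add: frechet_subdiff_def)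
  then obtain a where a: "f x = ereal a" by (cases "f x") auto
  have "f x + ereal (v \<bullet> (y - x)) \<le> f y" for y
  proof (cases "f y")
    case (real b)
    then have "a + v \<bullet> (y - x) \<le> b + e" if "e > 0" for e
      using frechet_subgradient_inequality_approx[OF cf v a _ that] by blast
    then have "a + v \<bullet> (y - x) \<le> b" by (rule field_le_epsilon)
    then show ?thesis using a real by simp
  next
    case MInf then show ?thesis using pf by (simp add: proper_fun_def)
  qed simp
  then show "v \<in> convex_subdiff f x" using fx by (simp add: convex_subdiff_def)
qed

lemma subdiff_eq_convex_subdiff:
  assumes cf: "convex_fun f" and pf: "proper_fun f"
  shows "subdiff f x = convex_subdiff f x"
proof
  show "convex_subdiff f x \<subseteq> subdiff f x"
  proof
    fix v assume v: "v \<in> convex_subdiff f x"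
    have "\<bar>f x\<bar> \<noteq> \<infinity>" "v \<in> frechet_subdiff f x"
      using v convex_subdiff_subset_frechet_subdiff[of f x] by (auto simp: convex_subdiff_def)
    then show "v \<in> subdiff f x" unfolding subdiff_def
      by (intro CollectI conjI exI[of _ "\<lambda>_. x"] exI[of _ "\<lambda>_. v"]) auto
  qed
next
  show "subdiff f x \<subseteq> convex_subdiff f x"
  proof
    fix v assume v: "v \<in> subdiff f x"
    then have fx: "\<bar>f x\<bar> \<noteq> \<infinity>" by (simp add: subdiff_def)
    from v obtain xs vs where xs: "xs \<longlonglongrightarrow> x" and fxs: "(\<lambda>k. f (xs k)) \<longlonglongrightarrow> f x"
      and vs: "\<And>k. vs k \<in> frechet_subdiff f (xs k)" and vsl: "vs \<longlonglongrightarrow> v"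
      unfolding subdiff_def by blast
    have "f x + ereal (v \<bullet> (y - x)) \<le> f y" for y
    proof (rule LIMSEQ_le_const2)
      have "(\<lambda>k. ereal (vs k \<bullet> (y - xs k))) \<longlonglongrightarrow> ereal (v \<bullet> (y - x))"
        by (intro tendsto_intros vsl xs)
      then show "(\<lambda>k. f (xs k) + ereal (vs k \<bullet> (y - xs k))) \<longlonglongrightarrow> f x + ereal (v \<bullet> (y - x))"
        using fx by (intro tendsto_add_ereal fxs) auto
      have "f (xs k) + ereal (vs k \<bullet> (y - xs k)) \<le> f y" for k
        using vs[of k] frechet_subdiff_subset_convex_subdiff[OF cf pf] by (auto simp: convex_subdiff_def)
      then show "\<exists>N. \<forall>k\<ge>N. f (xs k) + ereal (vs k \<bullet> (y - xs k)) \<le> f y" by blast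
    qed
    then show "v \<in> convex_subdiff f x" using fx by (simp add: convex_subdiff_def)
  qed
qed

lemma convex_convex_subdiff: "convex (convex_subdiff f x)"
proof (rule convexI)
  fix a b :: 'a and u v :: real
  assume a: "a \<in> convex_subdiff f x" and b: "b \<in> convex_subdiff f x"
    and uv: "0 \<le> u" "0 \<le> v" "u + v = 1"
  have fx: "\<bar>f x\<bar> \<noteq> \<infinity>" using a by (simp add: convex_subdiff_def)
  then obtain c where c: "f x = ereal c" by (cases "f x") auto
  have "f x + ereal ((u *\<^sub>R a + v *\<^sub>R b) \<bullet> (y - x)) \<le> f y" for y
  proof (cases "f y")
    case (real d)
    have "c + a \<bullet> (y - x) \<le> d" "c + b \<bullet> (y - x) \<le> d"
      using a b c real by (auto simp: convex_subdiff_def dest!: spec[of _ y])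
    then have "u * (c + a \<bullet> (y - x)) + v * (c + b \<bullet> (y - x)) \<le> u * d + v * d"
      using uv by (intro add_mono mult_left_mono) auto
    moreover have "u * (c + a \<bullet> (y - x)) + v * (c + b \<bullet> (y - x))
        = (u + v) * c + (u *\<^sub>R a + v *\<^sub>R b) \<bullet> (y - x)"
      by (simp add: inner_add_left algebra_simps)
    ultimately show ?thesis
      using c real uv(3) by (simp flip: distrib_right)
  next
    case MInf then show ?thesis using a c by (auto simp: convex_subdiff_def dest!: spec[of _ y])
  qed simp
  then show "u *\<^sub>R a + v *\<^sub>R b \<in> convex_subdiff f x" using fx by (simp add: convex_subdiff_def)
qed

lemma closed_convex_subdiff: "closed (convex_subdiff f x)"
proof (cases "\<bar>f x\<bar> = \<infinity>")
  case False
  then obtain c where c: "f x = ereal c" by (cases "f x") auto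
  then have "convex_subdiff f x = (\<Inter>y. {v. ereal (c + v \<bullet> (y - x)) \<le> f y})"
    by (auto simp: convex_subdiff_def)
  moreover have "closed {v. ereal (c + v \<bullet> (y - x)) \<le> f y}" for y
    by (intro closed_Collect_le continuous_intros)
  ultimately show ?thesis by auto
qed (simp add: convex_subdiff_def)

section \<open>Level sets of submersions\<close>

lemma closest_point_subspace:
  fixes T :: "'a::euclidean_space set"
  assumes "subspace T"
  shows "closest_point T a \<in> T" "\<And>t. t \<in> T \<Longrightarrow> (a - closest_point T a) \<bullet> t = 0"
proof -
  have cl: "closed T" and cv: "convex T" and ne: "T \<noteq> {}"
    using assms closed_subspace subspace_imp_convex subspace_0 by auto
  show cpT: "closest_point T a \<in> T" using closest_point_in_set[OF cl ne] .
  fix t assume t: "t \<in> T"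
  have "closest_point T a + t \<in> T" "closest_point T a - t \<in> T"
    using subspace_add[OF assms cpT t] subspace_diff[OF assms cpT t] by auto
  from closest_point_dot[OF cv cl this(1), of a] closest_point_dot[OF cv cl this(2), of a]
  show "(a - closest_point T a) \<bullet> t = 0" by (simp add: inner_diff_right)
qed

lemma closest_point_subspace_eqI:
  fixes T :: "'a::euclidean_space set"
  assumes T: "subspace T" and p: "p \<in> T" and orth: "\<And>t. t \<in> T \<Longrightarrow> (a - p) \<bullet> t = 0"
  shows "closest_point T a = p"
proof (rule closest_point_unique[OF subspace_imp_convex[OF T] closed_subspace[OF T] p, symmetric])
  show "\<forall>z\<in>T. dist a p \<le> dist a z"
  proof
    fix z assume z: "z \<in> T"
    have "(a - p) \<bullet> (p - z) = 0" using orth subspace_diff[OF T p z] by blast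
    then have "(dist a z)\<^sup>2 = (dist a p)\<^sup>2 + (norm (p - z))\<^sup>2"
      using norm_add_Pythagorean[of "a - p" "p - z"] by (simp add: dist_norm orthogonal_def)
    then show "dist a p \<le> dist a z" by (simp add: power2_le_imp_le)
  qed
qed

lemma linear_closest_point_subspace:
  fixes K :: "'a::euclidean_space set"
  assumes K: "subspace K"
  shows "linear (closest_point K)"
proof
  fix x y
  show "closest_point K (x + y) = closest_point K x + closest_point K y"
    using closest_point_subspace[OF K, where a=x] closest_point_subspace[OF K, where a=y]
    by (intro closest_point_subspace_eqI[OF K])
       (auto intro: subspace_add[OF K] simp: inner_diff_left inner_add_left algebra_simps)
next
  fix c x
  show "closest_point K (c *\<^sub>R x) = c *\<^sub>R closest_point K x"
    using closest_point_subspace[OF K, where a=x]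
    by (intro closest_point_subspace_eqI[OF K])
       (auto intro: subspace_scale[OF K] simp: inner_diff_left algebra_simps)
qed

lemma gradient_orthogonal_tangent_at_local_min:
  fixes h :: "'a::euclidean_space \<Rightarrow> real"
  assumes t: "t \<in> tangent_space M z" and W: "open W" "z \<in> W"
    and hd: "(h has_derivative (\<lambda>u. D \<bullet> u)) (at z)"
    and min: "\<forall>y\<in>M \<inter> W. h z \<le> h y"
  shows "D \<bullet> t = 0"
proof -
  obtain \<gamma> e where e: "e > 0" and \<gamma>0: "\<gamma> 0 = z" and \<gamma>M: "\<And>s. \<bar>s\<bar> < e \<Longrightarrow> \<gamma> s \<in> M"
    and \<gamma>d: "(\<gamma> has_vector_derivative t) (at 0)"
    using t unfolding tangent_space_def by blast
  have "isCont \<gamma> 0"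
    using \<gamma>d unfolding has_vector_derivative_def by (rule has_derivative_continuous)
  then have "\<forall>\<^sub>F s in at 0. \<gamma> s \<in> W"
    unfolding isCont_def using W \<gamma>0 by (auto dest: topological_tendstoD)
  then obtain d where d: "d > 0" and \<gamma>W: "\<And>s. s \<noteq> 0 \<Longrightarrow> dist s 0 < d \<Longrightarrow> \<gamma> s \<in> W"
    unfolding eventually_at by blast
  have "((\<lambda>s. h (\<gamma> s)) has_derivative (\<lambda>s. D \<bullet> (s *\<^sub>R t))) (at 0)"
    by (rule has_derivative_compose[OF \<gamma>d[unfolded has_vector_derivative_def]]) (use hd \<gamma>0 in simp)
  then have "((\<lambda>s. h (\<gamma> s)) has_real_derivative (D \<bullet> t)) (at 0)"
    unfolding has_field_derivative_def
    by (rule has_derivative_eq_rhs) (auto simp: fun_eq_iff mult.commute)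
  then show ?thesis
  proof (rule DERIV_local_min[of _ _ _ "min d e"])
    show "0 < min d e" using d e by simp
    show "\<forall>s. \<bar>0 - s\<bar> < min d e \<longrightarrow> h (\<gamma> 0) \<le> h (\<gamma> s)"
    proof (intro allI impI)
      fix s :: real assume s: "\<bar>0 - s\<bar> < min d e"
      show "h (\<gamma> 0) \<le> h (\<gamma> s)"
      proof (cases "s = 0")
        case False
        then have "\<gamma> s \<in> M \<inter> W" using \<gamma>W \<gamma>M s by auto
        then show ?thesis using min \<gamma>0 by auto
      qed simp
    qed
  qed
qed

lemma nearest_point_orthogonal_tangent:
  assumes z: "z \<in> M" and W: "open W" "z \<in> W"
    and min: "\<forall>u\<in>M \<inter> W. dist x z \<le> dist x u" and t: "t \<in> tangent_space M z"
  shows "(x - z) \<bullet> t = 0"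
proof -
  have "((\<lambda>u. (u - x) \<bullet> (u - x)) has_derivative (\<lambda>h. (2 *\<^sub>R (z - x)) \<bullet> h)) (at z)"
    by (rule has_derivative_eq_rhs, (rule derivative_intros)+)
       (auto simp: fun_eq_iff inner_commute inner_add_left)
  moreover have "\<forall>u\<in>M \<inter> W. (z - x) \<bullet> (z - x) \<le> (u - x) \<bullet> (u - x)"
    using min by (auto simp: dist_norm norm_minus_commute power_mono simp flip: power2_norm_eq_inner)
  ultimately have "(2 *\<^sub>R (z - x)) \<bullet> t = 0"
    using gradient_orthogonal_tangent_at_local_min[OF t W] by blast
  then show ?thesis by (simp add: inner_diff_left)
qed

lemma small_multiples_in_open:
  fixes v :: "'a::real_normed_vector"
  assumes "open V" "0 \<in> V"
  obtains e where "e > 0" "\<And>s. \<bar>s\<bar> < e \<Longrightarrow> s *\<^sub>R v \<in> V"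
proof -
  have "open ((\<lambda>s. s *\<^sub>R v) -` V)" using assms(1) by (intro open_vimage continuous_intros)
  moreover have "0 \<in> (\<lambda>s. s *\<^sub>R v) -` V" using assms(2) by simp
  ultimately obtain e where "e > 0" "ball 0 e \<subseteq> (\<lambda>s. s *\<^sub>R v) -` V"
    using open_contains_ball by blast
  then show ?thesis by (intro that[of e]) (auto simp: subset_iff)
qed

lemma linear_blinfun_apply: "linear (blinfun_apply f)"
  using blinfun.bounded_linear_right bounded_linear.linear by blast

lemma linear_perturbation_solvable:
  fixes B D :: "'a::euclidean_space \<Rightarrow> 'a"
  assumes B: "linear B" and D: "linear D" and c: "c > 0"
    and below: "\<And>u. c * norm u \<le> norm (D u)"
    and close: "\<And>u. norm (B u - D u) \<le> \<epsilon> * norm u" and \<epsilon>0: "0 \<le> \<epsilon>" and \<epsilon>: "\<epsilon> < c / 2"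
  shows "\<exists>u. B u = D u0 \<and> norm (u - u0) \<le> 2 * \<epsilon> * norm u0 / c"
proof -
  have "inj B"
  proof (subst linear_injective_0[OF B], intro allI impI)
    fix u assume "B u = 0"
    then have "c * norm u \<le> \<epsilon> * norm u" using below[of u] close[of u] by simp
    then have "(c - \<epsilon>) * norm u \<le> 0" by (simp add: algebra_simps)
    moreover have "c - \<epsilon> > 0" using c \<epsilon> by simp
    ultimately show "u = 0" by (simp add: mult_le_0_iff)
  qed
  then obtain u where u: "B u = D u0"
    using linear_injective_imp_surjective[OF B] by (metis surjD)
  have "c * norm (u - u0) \<le> norm (B u - D u)"
    using below[of "u - u0"] u by (simp add: linear_diff[OF D] norm_minus_commute)
  also have "\<dots> \<le> \<epsilon> * norm u" by (rule close)
  also have "\<dots> \<le> \<epsilon> * (norm (u - u0) + norm u0)"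
    using \<epsilon>0 norm_triangle_sub[of u u0] by (intro mult_left_mono) (auto simp: norm_minus_commute)
  finally have "(c - \<epsilon>) * norm (u - u0) \<le> \<epsilon> * norm u0" by (simp add: algebra_simps)
  moreover have "c / 2 * norm (u - u0) \<le> (c - \<epsilon>) * norm (u - u0)"
    using \<epsilon> by (intro mult_right_mono) auto
  ultimately show ?thesis using u c by (auto simp: field_simps)
qed

locale submersion_chart =
  fixes U :: "'a::euclidean_space set" and L :: "'a set" and F :: "'a \<Rightarrow> 'a" and F' :: "'a \<Rightarrow> 'a \<Rightarrow>\<^sub>L 'a"
  assumes open_U: "open U"
    and F_in_L: "\<And>y. y \<in> U \<Longrightarrow> F y \<in> L"
    and F_deriv: "\<And>y. y \<in> U \<Longrightarrow> (F has_derivative blinfun_apply (F' y)) (at y)"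
    and range_F': "\<And>y. y \<in> U \<Longrightarrow> range (blinfun_apply (F' y)) = L"
    and continuous_F': "continuous_on U F'"
begin

context
  fixes y0 assumes y0: "y0 \<in> U"
begin

text \<open>With \<open>A = F'(y0)\<close>, \<open>K = ker A\<close> and \<open>P\<close> the orthogonal projection onto \<open>K\<close>, the map
  \<open>\<Phi> w = A\<^sup>* (F w) + P (w - y0)\<close> has the injective derivative \<open>A\<^sup>* A + P\<close> at \<open>y0\<close>; as \<open>A\<^sup>*\<close> is
  injective on \<open>L = range A\<close>, \<open>\<Phi> w \<in> K\<close> forces \<open>F w = 0\<close>. So \<open>\<Phi>\<close> straightens the zero set of \<open>F\<close>.\<close>

definition "A = blinfun_apply (F' y0)"
definition "A_adj = adjoint A"
definition "K = {u. A u = 0}"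
definition "P = closest_point K"
definition "\<Phi> w = A_adj (F w) + P (w - y0)"
definition "\<Phi>' w = (Blinfun A_adj o\<^sub>L F' w) + Blinfun P"

lemma linear_A: "linear A"
  unfolding A_def by (rule linear_blinfun_apply)

lemma bounded_linear_A_adj: "bounded_linear A_adj"
  unfolding A_adj_def using adjoint_linear[OF linear_A] linear_conv_bounded_linear by blast

lemma subspace_K: "subspace K"
  unfolding K_def by (rule linear_subspace_kernel[OF linear_A])

lemma bounded_linear_P: "bounded_linear P"
  unfolding P_def using linear_closest_point_subspace[OF subspace_K] linear_conv_bounded_linear by blast

lemma P_in_K: "P u \<in> K" and P_orth: "k \<in> K \<Longrightarrow> (u - P u) \<bullet> k = 0"
  unfolding P_def using closest_point_subspace[OF subspace_K] by auto

lemma A_adj_adjoint: "A_adj w \<bullet> u = w \<bullet> A u"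
  unfolding A_adj_def by (rule adjoint_clauses(2)[OF linear_A])

lemma A_adj_in_K_imp_zero:
  assumes "w \<in> L" "A_adj w + P u \<in> K"
  shows "w = 0"
proof -
  have "A_adj w \<in> K" using subspace_diff[OF subspace_K assms(2) P_in_K[of u]] by simp
  then have "A_adj w = 0" using A_adj_adjoint[of w "A_adj w"] by (simp add: K_def)
  obtain x where "w = A x" using assms(1) range_F'[OF y0] by (auto simp: A_def)
  then have "w \<bullet> w = A_adj w \<bullet> x" using A_adj_adjoint by simp
  then show "w = 0" using \<open>A_adj w = 0\<close> by simp
qed

lemma \<Phi>'_apply: "blinfun_apply (\<Phi>' w) h = A_adj (F' w h) + P h"
  by (simp add: \<Phi>'_def bounded_linear_Blinfun_apply[OF bounded_linear_A_adj]
      bounded_linear_Blinfun_apply[OF bounded_linear_P] plus_blinfun.rep_eq)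

lemma \<Phi>_deriv:
  assumes "w \<in> U" shows "(\<Phi> has_derivative blinfun_apply (\<Phi>' w)) (at w)"
proof -
  have "((\<lambda>w. A_adj (F w) + P (w - y0)) has_derivative (\<lambda>h. A_adj (F' w h) + P (h - 0))) (at w)"
    by (intro has_derivative_add bounded_linear.has_derivative[OF bounded_linear_A_adj F_deriv[OF assms]]
        bounded_linear.has_derivative[OF bounded_linear_P] has_derivative_diff has_derivative_ident
        has_derivative_const)
  then show ?thesis unfolding \<Phi>_def by (rule has_derivative_eq_rhs) (simp add: fun_eq_iff \<Phi>'_apply)
qed

lemma continuous_\<Phi>': "continuous_on U \<Phi>'"
  unfolding \<Phi>'_def by (intro continuous_intros continuous_F')

lemma \<Phi>'_y0_apply: "blinfun_apply (\<Phi>' y0) u = A_adj (A u) + P u"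
  by (simp add: \<Phi>'_apply A_def)

lemma \<Phi>'_y0_on_K: "k \<in> K \<Longrightarrow> blinfun_apply (\<Phi>' y0) k = k"
  using closest_point_self[of k K] linear_0[OF bounded_linear.linear[OF bounded_linear_A_adj]]
  by (simp add: \<Phi>'_y0_apply K_def P_def)

lemma inj_\<Phi>'_y0: "inj (blinfun_apply (\<Phi>' y0))"
proof (subst linear_injective_0[OF linear_blinfun_apply], intro allI impI)
  fix u assume "blinfun_apply (\<Phi>' y0) u = 0"
  then have "u \<bullet> A_adj (A u) + u \<bullet> P u = 0" by (simp add: \<Phi>'_y0_apply flip: inner_add_right)
  moreover have "(u - P u) \<bullet> P u = 0" by (rule P_orth[OF P_in_K])
  then have "u \<bullet> P u = P u \<bullet> P u" by (simp add: inner_diff_left)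
  ultimately have "A u \<bullet> A u + P u \<bullet> P u = 0" using A_adj_adjoint[of "A u" u] by (simp add: inner_commute)
  then have "A u = 0" "P u = 0" by (smt (verit) inner_ge_zero inner_eq_zero_iff)+
  then show "u = 0" using closest_point_self[of u K] by (simp add: K_def P_def)
qed

lemma \<Phi>_local_inverse:
  assumes Fy0: "F y0 = 0"
  obtains V g g' where "open V" "0 \<in> V" "g 0 = y0" "\<And>w. w \<in> V \<Longrightarrow> g w \<in> U \<and> \<Phi> (g w) = w"
    "(g has_derivative g') (at 0)" "\<And>k. k \<in> K \<Longrightarrow> g' k = k"
proof -
  obtain g0 where g0: "linear g0" "g0 \<circ> blinfun_apply (\<Phi>' y0) = id"
    using linear_injective_left_inverse[OF linear_blinfun_apply inj_\<Phi>'_y0] by blast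
  then have "Blinfun g0 o\<^sub>L \<Phi>' y0 = id_blinfun"
    by (intro blinfun_eqI) (simp add: bounded_linear_Blinfun_apply linear_conv_bounded_linear fun_eq_iff)
  then obtain U' V g g' where "open U'" "U' \<subseteq> U" "y0 \<in> U'" "open V" "\<Phi> y0 \<in> V"
    and hom: "homeomorphism U' V \<Phi> g"
    and g_deriv: "\<And>y. y \<in> V \<Longrightarrow> (g has_derivative (g' y)) (at y)"
    and g': "\<And>y. y \<in> V \<Longrightarrow> g' y = inv (blinfun_apply (\<Phi>' (g y)))"
    and bij: "\<And>y. y \<in> V \<Longrightarrow> bij (blinfun_apply (\<Phi>' (g y)))"
    using inverse_function_theorem[OF open_U \<Phi>_deriv continuous_\<Phi>' y0] by blast
  have "\<Phi> y0 = 0"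
    using Fy0 linear_0[OF bounded_linear.linear[OF bounded_linear_A_adj]]
      linear_0[OF bounded_linear.linear[OF bounded_linear_P]]
    by (simp add: \<Phi>_def)
  then have V0: "0 \<in> V" and g0: "g 0 = y0"
    using hom \<open>y0 \<in> U'\<close> \<open>\<Phi> y0 \<in> V\<close> by (auto dest: homeomorphism_apply1)
  have "g w \<in> U \<and> \<Phi> (g w) = w" if "w \<in> V" for w
    using hom that \<open>U' \<subseteq> U\<close> by (metis homeomorphism_image2 homeomorphism_apply2 imageI subsetD)
  moreover have "g' 0 k = k" if "k \<in> K" for k
  proof -
    have "inj (blinfun_apply (\<Phi>' (g 0)))" using bij[OF V0] bij_is_inj by blast
    then show ?thesis using g'[OF V0] \<Phi>'_y0_on_K[OF that] g0 by (metis inv_f_f)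
  qed
  ultimately show ?thesis using that[OF \<open>open V\<close> V0 g0 _ g_deriv[OF V0]] by blast
qed

lemma kernel_vector_is_velocity:
  assumes Fy0: "F y0 = 0" and v: "blinfun_apply (F' y0) v = 0"
  shows "\<exists>\<gamma> e. e > 0 \<and> \<gamma> 0 = y0 \<and> (\<forall>s. \<bar>s\<bar> < e \<longrightarrow> \<gamma> s \<in> U \<and> F (\<gamma> s) = 0) \<and>
           (\<gamma> has_vector_derivative v) (at 0)"
proof -
  obtain V g g' where V: "open V" "0 \<in> V" and g0: "g 0 = y0"
    and gV: "\<And>w. w \<in> V \<Longrightarrow> g w \<in> U \<and> \<Phi> (g w) = w"
    and g_deriv: "(g has_derivative g') (at 0)" and g'K: "\<And>k. k \<in> K \<Longrightarrow> g' k = k"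
    by (rule \<Phi>_local_inverse[OF Fy0]) blast
  have vK: "v \<in> K" using v by (simp add: K_def A_def)
  obtain e where e: "e > 0" and sV: "\<And>s. \<bar>s\<bar> < e \<Longrightarrow> s *\<^sub>R v \<in> V"
    using small_multiples_in_open[OF V] by blast
  show ?thesis
  proof (intro exI conjI allI impI)
    show "e > 0" "g (0 *\<^sub>R v) = y0" using e g0 by simp_all
    fix s :: real assume s: "\<bar>s\<bar> < e"
    show gU: "g (s *\<^sub>R v) \<in> U" using gV[OF sV[OF s]] by blast
    have "A_adj (F (g (s *\<^sub>R v))) + P (g (s *\<^sub>R v) - y0) \<in> K"
      using gV[OF sV[OF s]] subspace_scale[OF subspace_K vK] by (simp add: \<Phi>_def)
    then show "F (g (s *\<^sub>R v)) = 0" using F_in_L[OF gU] A_adj_in_K_imp_zero by blast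
  next
    have "((\<lambda>s. s *\<^sub>R v) has_derivative (\<lambda>s. s *\<^sub>R v)) (at 0)"
      by (intro derivative_eq_intros) auto
    then have "((\<lambda>s. g (s *\<^sub>R v)) has_derivative (\<lambda>s. g' (s *\<^sub>R v))) (at 0)"
      using has_derivative_compose[of "\<lambda>s. s *\<^sub>R v" _ 0 _ g g'] g_deriv by simp
    moreover have "linear g'" using g_deriv has_derivative_linear by blast
    ultimately show "((\<lambda>s. g (s *\<^sub>R v)) has_vector_derivative v) (at 0)"
      using g'K[OF vK] by (simp add: has_vector_derivative_def linear_scale)
  qed
qed

lemma \<Phi>'_perturbation:
  obtains B where "B > 0"
    "\<And>y u. norm (blinfun_apply (\<Phi>' y) u - blinfun_apply (\<Phi>' y0) u) \<le> B * norm (F' y - F' y0) * norm u"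
proof -
  obtain B where B: "B > 0" "\<And>w. norm (A_adj w) \<le> B * norm w"
    using linear_bounded_pos[OF bounded_linear.linear[OF bounded_linear_A_adj]] by blast
  have "norm (blinfun_apply (\<Phi>' y) u - blinfun_apply (\<Phi>' y0) u) \<le> B * norm (F' y - F' y0) * norm u"
    for y u
  proof -
    have "blinfun_apply (\<Phi>' y) u - blinfun_apply (\<Phi>' y0) u = A_adj (blinfun_apply (F' y - F' y0) u)"
      by (simp add: \<Phi>'_apply linear_diff[OF bounded_linear.linear[OF bounded_linear_A_adj]]
          blinfun.diff_left)
    also have "norm \<dots> \<le> B * norm (blinfun_apply (F' y - F' y0) u)" by (rule B(2))
    also have "\<dots> \<le> B * (norm (F' y - F' y0) * norm u)"
      using B(1) norm_blinfun by (intro mult_left_mono) auto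
    finally show ?thesis by (simp add: mult.assoc)
  qed
  then show ?thesis using B(1) that by blast
qed

text \<open>For \<open>y\<close> near \<open>y0\<close> the equation \<open>\<Phi>'(y) u = t\<close> is a small perturbation of \<open>\<Phi>'(y0) u = t\<close>,
  whose solution for \<open>t \<in> K\<close> is \<open>u = t\<close>.\<close>
lemma \<Phi>'_solutions_converge:
  assumes ys: "ys \<longlonglongrightarrow> y0" and tK: "t \<in> K"
  shows "\<exists>ts. (\<forall>\<^sub>F n in sequentially. blinfun_apply (\<Phi>' (ys n)) (ts n) = t) \<and> ts \<longlonglongrightarrow> t"
proof -
  define D0 where "D0 = blinfun_apply (\<Phi>' y0)"
  have linD0: "linear D0" unfolding D0_def by (rule linear_blinfun_apply)
  obtain c where c: "c > 0" "\<And>u. c * norm u \<le> norm (D0 u)"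
    using linear_inj_bounded_below_pos[OF linD0 inj_\<Phi>'_y0[folded D0_def]] by blast
  obtain B where B: "B > 0"
    and B_close: "\<And>y u. norm (blinfun_apply (\<Phi>' y) u - D0 u) \<le> B * norm (F' y - F' y0) * norm u"
    unfolding D0_def by (rule \<Phi>'_perturbation) blast
  define \<epsilon> where "\<epsilon> n = B * norm (F' (ys n) - F' y0)" for n
  have evU: "\<forall>\<^sub>F n in sequentially. ys n \<in> U" using ys open_U y0 by (auto dest: topological_tendstoD)
  have "(\<lambda>n. F' (ys n)) \<longlonglongrightarrow> F' y0"
    by (rule continuous_on_tendsto_compose[OF continuous_F' ys y0 evU])
  then have \<epsilon>0: "\<epsilon> \<longlonglongrightarrow> 0"
    unfolding \<epsilon>_def by (intro tendsto_mult_right_zero tendsto_norm_zero LIM_zero)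
  have "\<exists>u. blinfun_apply (\<Phi>' (ys n)) u = t \<and> norm (u - t) \<le> 2 * \<epsilon> n * norm t / c"
    if "\<epsilon> n < c / 2" for n
  proof -
    have "norm (blinfun_apply (\<Phi>' (ys n)) u - D0 u) \<le> \<epsilon> n * norm u" for u
      using B_close by (simp add: \<epsilon>_def)
    moreover have "0 \<le> \<epsilon> n" using B by (simp add: \<epsilon>_def)
    ultimately show ?thesis
      using linear_perturbation_solvable[OF linear_blinfun_apply linD0 c, of _ "\<epsilon> n" t] that
        \<Phi>'_y0_on_K[OF tK] by (simp add: D0_def)
  qed
  then have "\<forall>n. \<exists>u. \<epsilon> n < c / 2 \<longrightarrow>
      blinfun_apply (\<Phi>' (ys n)) u = t \<and> norm (u - t) \<le> 2 * \<epsilon> n * norm t / c"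
    by blast
  from choice[OF this] obtain ts where ts: "\<And>n. \<epsilon> n < c / 2 \<Longrightarrow>
      blinfun_apply (\<Phi>' (ys n)) (ts n) = t \<and> norm (ts n - t) \<le> 2 * \<epsilon> n * norm t / c"
    by blast
  have ev: "\<forall>\<^sub>F n in sequentially. \<epsilon> n < c / 2"
    using \<epsilon>0 c(1) by (auto dest: order_tendstoD(2)[where a="c / 2"])
  have "(\<lambda>n. ts n - t) \<longlonglongrightarrow> 0"
  proof (rule Lim_null_comparison)
    show "\<forall>\<^sub>F n in sequentially. norm (ts n - t) \<le> 2 * \<epsilon> n * norm t / c"
      using ev by eventually_elim (use ts in blast)
    show "(\<lambda>n. 2 * \<epsilon> n * norm t / c) \<longlonglongrightarrow> 0"
      using \<epsilon>0 c(1) by (auto intro!: tendsto_eq_intros)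
  qed
  moreover have "\<forall>\<^sub>F n in sequentially. blinfun_apply (\<Phi>' (ys n)) (ts n) = t"
    using ev by eventually_elim (use ts in blast)
  ultimately show ?thesis by (blast intro: LIM_zero_cancel)
qed

lemma kernel_lower_semicontinuous:
  assumes ys: "ys \<longlonglongrightarrow> y0" and t: "blinfun_apply (F' y0) t = 0"
  shows "\<exists>ts. (\<forall>\<^sub>F n in sequentially. blinfun_apply (F' (ys n)) (ts n) = 0) \<and> ts \<longlonglongrightarrow> t"
proof -
  have tK: "t \<in> K" using t by (simp add: K_def A_def)
  then obtain ts where ev: "\<forall>\<^sub>F n in sequentially. blinfun_apply (\<Phi>' (ys n)) (ts n) = t"
    and "ts \<longlonglongrightarrow> t"
    using \<Phi>'_solutions_converge[OF ys] by blast
  moreover have "\<forall>\<^sub>F n in sequentially. ys n \<in> U"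
    using ys open_U y0 by (auto dest: topological_tendstoD)
  with ev have "\<forall>\<^sub>F n in sequentially. blinfun_apply (F' (ys n)) (ts n) = 0"
  proof eventually_elim
    case (elim n)
    then have "A_adj (blinfun_apply (F' (ys n)) (ts n)) + P (ts n) \<in> K"
      using tK by (simp add: \<Phi>'_apply)
    then show ?case using range_F'[OF elim(2)] A_adj_in_K_imp_zero by blast
  qed
  ultimately show ?thesis by blast
qed

end

lemma tangent_space_eq_kernel:
  assumes MU: "M \<inter> U = {y\<in>U. F y = 0}" and y: "y \<in> M" "y \<in> U"
  shows "tangent_space M y = {v. blinfun_apply (F' y) v = 0}"
proof
  show "tangent_space M y \<subseteq> {v. blinfun_apply (F' y) v = 0}"
  proof
    fix v assume v: "v \<in> tangent_space M y"
    define w where "w = blinfun_apply (F' y) v"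
    have "((\<lambda>u. w \<bullet> F u) has_derivative (\<lambda>u. adjoint (blinfun_apply (F' y)) w \<bullet> u)) (at y)"
      using bounded_linear.has_derivative[OF bounded_linear_inner_right F_deriv[OF y(2)], of w]
      by (simp add: adjoint_clauses(2)[OF linear_blinfun_apply])
    moreover have "F y = 0" using MU y by blast
    then have "\<forall>u\<in>M \<inter> U. w \<bullet> F y \<le> w \<bullet> F u" using MU by auto
    ultimately have "adjoint (blinfun_apply (F' y)) w \<bullet> v = 0"
      using gradient_orthogonal_tangent_at_local_min[OF v open_U y(2)] by blast
    then have "w \<bullet> w = 0"
      by (simp add: w_def adjoint_clauses(2)[OF linear_blinfun_apply])
    then show "v \<in> {v. blinfun_apply (F' y) v = 0}" by (simp add: w_def)
  qed
  show "{v. blinfun_apply (F' y) v = 0} \<subseteq> tangent_space M y"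
  proof
    fix v assume "v \<in> {v. blinfun_apply (F' y) v = 0}"
    moreover have "F y = 0" using MU y by blast
    ultimately obtain \<gamma> e where "e > 0" "\<gamma> 0 = y" and \<gamma>: "\<forall>s. \<bar>s\<bar> < e \<longrightarrow> \<gamma> s \<in> U \<and> F (\<gamma> s) = 0"
      and "(\<gamma> has_vector_derivative v) (at 0)"
      using kernel_vector_is_velocity[OF y(2)] by blast
    moreover have "\<forall>s. \<bar>s\<bar> < e \<longrightarrow> \<gamma> s \<in> M" using \<gamma> MU by blast
    ultimately show "v \<in> tangent_space M y" unfolding tangent_space_def by blast
  qed
qed

end


section \<open>Partly smooth functions near a minimizer\<close>

lemma min_half_square_sum_le:
  fixes a b c r :: real
  assumes "0 \<le> a" "0 \<le> b" "b \<le> 1" "0 < c" "0 < r"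
  shows "min c r / 2 * (a + b)\<^sup>2 \<le> c * a\<^sup>2 + r * b"
proof -
  define m where "m = min c r"
  have m: "0 < m" "m \<le> c" "m \<le> r" using assms by (auto simp: m_def)
  have "(a + b)\<^sup>2 \<le> 2 * (a\<^sup>2 + b\<^sup>2)"
    using zero_le_power2[of "a - b"] by (simp add: power2_eq_square algebra_simps)
  then have "m / 2 * (a + b)\<^sup>2 \<le> m / 2 * (2 * (a\<^sup>2 + b\<^sup>2))" using m by (intro mult_left_mono) auto
  also have "\<dots> = m * a\<^sup>2 + m * b\<^sup>2" by (simp add: algebra_simps)
  also have "\<dots> \<le> c * a\<^sup>2 + r * b"
    using m assms(2,3) by (intro add_mono mult_mono) (auto simp: power2_eq_square mult_left_le_one_le)
  finally show ?thesis by (simp add: m_def)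
qed

locale partly_smooth_minimizer = submersion_chart U L F F' for U :: "'a::euclidean_space set" and L F F' +
  fixes f :: "'a \<Rightarrow> ereal" and M :: "'a set" and xb :: 'a and g :: "'a \<Rightarrow> real" and g' :: "'a \<Rightarrow> 'a"
  assumes proper_f: "proper_fun f" and convex_f: "convex_fun f" and closed_f: "closed_fun f"
    and xb_argmin: "xb \<in> argmin_set f" and xb_M: "xb \<in> M" and xb_U: "xb \<in> U"
    and M_chart: "M \<inter> U = {y\<in>U. F y = 0}"
    and extension: "local_smooth_ext f M xb U g g'"
    and subdiff_nonempty: "\<And>z. z \<in> M \<Longrightarrow> z \<in> U \<Longrightarrow> subdiff f z \<noteq> {}"
    and partly_smooth: "partly_smooth_at f M xb"
    and zero_rel_interior: "0 \<in> rel_interior (subdiff f xb)"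
begin

abbreviation "S \<equiv> argmin_set f"
abbreviation "T y \<equiv> tangent_space M y"

lemma g_deriv: "y \<in> U \<Longrightarrow> (g has_derivative (\<lambda>h. g' y \<bullet> h)) (at y)"
  using extension by (auto simp: local_smooth_ext_def C1_on_with_grad_def)

lemma continuous_on_g: "continuous_on U g"
  using g_deriv by (intro has_derivative_continuous_on) (auto intro: has_derivative_at_withinI)

lemma f_eq_g: "y \<in> M \<Longrightarrow> y \<in> U \<Longrightarrow> f y = ereal (g y)"
  using extension by (auto simp: local_smooth_ext_def)

lemma f_xb: "f xb = ereal (g xb)"
  using f_eq_g[OF xb_M xb_U] .

lemma f_xb_le: "f xb \<le> f y"
  using xb_argmin by (simp add: argmin_set_def)

lemma argmin_iff: "p \<in> S \<longleftrightarrow> f p \<le> ereal (g xb)"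
proof
  assume "f p \<le> ereal (g xb)"
  then show "p \<in> S" using f_xb f_xb_le order_trans by (auto simp: argmin_set_def)
qed (auto simp: argmin_set_def simp flip: f_xb)

lemma f_argmin: "p \<in> S \<Longrightarrow> f p = ereal (g xb)"
  using f_xb_le[of p] f_xb by (simp add: argmin_iff)

lemma g_xb_le:
  assumes "y \<in> M" "y \<in> U" shows "g xb \<le> g y"
  using f_xb_le[of y] f_eq_g[OF assms] f_xb by simp

lemma subdiff_eq: "subdiff f x = convex_subdiff f x"
  using subdiff_eq_convex_subdiff[OF convex_f proper_f] .

lemma closed_argmin: "closed S"
proof -
  have "S = (\<lambda>x. (x, g xb)) -` epigraph f" by (auto simp: argmin_iff epigraph_def)
  then show ?thesis
    using closed_f unfolding closed_fun_def by (auto intro!: continuous_closed_vimage continuous_intros)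
qed

lemma tangent_space_eq: "y \<in> M \<Longrightarrow> y \<in> U \<Longrightarrow> T y = {v. blinfun_apply (F' y) v = 0}"
  using tangent_space_eq_kernel[OF M_chart] .

lemma subspace_tangent_space: "y \<in> M \<Longrightarrow> y \<in> U \<Longrightarrow> subspace (T y)"
  using tangent_space_eq linear_subspace_kernel[OF linear_blinfun_apply] by simp

text \<open>The Riemannian gradient does not depend on the chosen extension: two extensions agree on
  \<open>M\<close>, so their difference is stationary along \<open>M\<close> and their gradients differ by a normal vector.\<close>
lemma riem_grad_eq:
  assumes y: "y \<in> M" "y \<in> U"
  shows "riem_grad f M y = closest_point (T y) (g' y)"
proof -
  have "\<exists>w U g g'. local_smooth_ext f M y U g g' \<and> w = closest_point (T y) (g' y)"
    using extension y unfolding local_smooth_ext_def by blast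
  from someI_ex[OF this] obtain U2 g2 g2' where ext2: "local_smooth_ext f M y U2 g2 g2'"
    and rg: "riem_grad f M y = closest_point (T y) (g2' y)"
    unfolding riem_grad_def by blast
  have sub: "subspace (T y)" using subspace_tangent_space y .
  have "(g' y - g2' y) \<bullet> t = 0" if t: "t \<in> T y" for t
  proof -
    have W: "open (U \<inter> U2)" "y \<in> U \<inter> U2" using open_U ext2 y by (auto simp: local_smooth_ext_def)
    have "(g2 has_derivative (\<lambda>h. g2' y \<bullet> h)) (at y)"
      using ext2 y by (auto simp: local_smooth_ext_def C1_on_with_grad_def)
    from has_derivative_diff[OF g_deriv[OF y(2)] this]
    have "((\<lambda>u. g u - g2 u) has_derivative (\<lambda>h. (g' y - g2' y) \<bullet> h)) (at y)"
      by (simp add: inner_diff_left)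
    moreover have "g u = g2 u" if "u \<in> M" "u \<in> U \<inter> U2" for u
      using ext2 f_eq_g[of u] that unfolding local_smooth_ext_def by auto
    then have "\<forall>u\<in>M \<inter> (U \<inter> U2). g y - g2 y \<le> g u - g2 u" using y W(2) by auto
    ultimately show ?thesis using gradient_orthogonal_tangent_at_local_min[OF t W] by blast
  qed
  then have "closest_point (T y) (g' y) = closest_point (T y) (g2' y)"
    using closest_point_subspace[OF sub, where a = "g2' y"]
    by (intro closest_point_subspace_eqI[OF sub]) (auto simp: inner_diff_left)
  then show ?thesis using rg by simp
qed

lemma riem_grad_in_tangent_space:
  assumes "y \<in> M" "y \<in> U" shows "riem_grad f M y \<in> T y"
  using closest_point_subspace(1)[OF subspace_tangent_space[OF assms]] by (simp add: riem_grad_eq[OF assms])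

lemma inner_riem_grad_tangent:
  assumes "y \<in> M" "y \<in> U" "t \<in> T y" shows "riem_grad f M y \<bullet> t = g' y \<bullet> t"
  using closest_point_subspace(2)[OF subspace_tangent_space[OF assms(1,2)] assms(3), where a = "g' y"]
  by (simp add: riem_grad_eq[OF assms(1,2)] inner_diff_left)

text \<open>Fermat's rule for \<open>g - \<langle>q, \<cdot>\<rangle>\<close>, which is minimal on \<open>M\<close> at \<open>y\<close> by the subgradient inequality.\<close>
lemma inner_subgradient_tangent:
  assumes y: "y \<in> M" "y \<in> U" and q: "q \<in> subdiff f y" and t: "t \<in> T y"
  shows "q \<bullet> t = riem_grad f M y \<bullet> t"
proof -
  have "((\<lambda>u. g u - q \<bullet> u) has_derivative (\<lambda>h. (g' y - q) \<bullet> h)) (at y)"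
    using has_derivative_diff[OF g_deriv[OF y(2)] bounded_linear.has_derivative[OF
        bounded_linear_inner_right has_derivative_ident]]
    by (simp add: inner_diff_left)
  moreover have "g y - q \<bullet> y \<le> g u - q \<bullet> u" if u: "u \<in> M \<inter> U" for u
  proof -
    have "f y + ereal (q \<bullet> (u - y)) \<le> f u" using q by (simp add: subdiff_eq convex_subdiff_def)
    then show ?thesis using f_eq_g y u by (simp add: inner_diff_right)
  qed
  ultimately have "(g' y - q) \<bullet> t = 0"
    using gradient_orthogonal_tangent_at_local_min[OF t open_U y(2)] by blast
  then show ?thesis using inner_riem_grad_tangent[OF y t] by (simp add: inner_diff_left)
qed

lemma norm_riem_grad_le_at_proximal_min:
  assumes y: "y \<in> M" "y \<in> U" and W: "open W" "y \<in> W" and \<mu>: "\<mu> \<ge> 0"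
    and min: "\<forall>u\<in>M \<inter> W. g y + \<mu> * (norm (y - x))\<^sup>2 \<le> g u + \<mu> * (norm (u - x))\<^sup>2"
  shows "norm (riem_grad f M y) \<le> 2 * \<mu> * norm (y - x)"
proof -
  define p where "p = riem_grad f M y"
  have pT: "p \<in> T y" using riem_grad_in_tangent_space[OF y] by (simp add: p_def)
  have "((\<lambda>u. (u - x) \<bullet> (u - x)) has_derivative (\<lambda>h. h \<bullet> (y - x) + (y - x) \<bullet> h)) (at y)"
    by (rule has_derivative_eq_rhs, (rule derivative_intros)+) (auto simp: fun_eq_iff inner_commute)
  from has_derivative_add[OF g_deriv[OF y(2)] has_derivative_mult_right[OF this, of \<mu>]]
  have "((\<lambda>u. g u + \<mu> * (norm (u - x))\<^sup>2) has_derivative (\<lambda>h. (g' y + (2 * \<mu>) *\<^sub>R (y - x)) \<bullet> h)) (at y)"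
    unfolding power2_norm_eq_inner
    by (rule has_derivative_eq_rhs) (auto simp: fun_eq_iff inner_add_left inner_commute algebra_simps)
  then have "(g' y + (2 * \<mu>) *\<^sub>R (y - x)) \<bullet> p = 0"
    using gradient_orthogonal_tangent_at_local_min[OF pT W] min by blast
  then have "g' y \<bullet> p + (2 * \<mu>) * ((y - x) \<bullet> p) = 0"
    by (simp only: inner_add_left inner_scaleR_left)
  moreover have "p \<bullet> p = g' y \<bullet> p"
    using inner_riem_grad_tangent[OF y pT] by (simp only: p_def)
  ultimately have "p \<bullet> p = 2 * \<mu> * (- ((y - x) \<bullet> p))" by linarith
  also have "\<dots> \<le> 2 * \<mu> * (norm (y - x) * norm p)"
    using \<mu> Cauchy_Schwarz_ineq2[of "y - x" p] by (intro mult_left_mono) auto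
  finally have "norm p * norm p \<le> (2 * \<mu> * norm (y - x)) * norm p"
    by (simp only: power2_norm_eq_inner[symmetric] power2_eq_square mult.assoc)
  then show ?thesis
    using \<mu> by (cases "norm p = 0") (auto simp: p_def dest: mult_right_le_imp_le)
qed

lemma small_normals_in_subdiff:
  obtains \<rho> where "\<rho> > 0" "\<And>w. w \<in> normal_space M xb \<Longrightarrow> norm w \<le> \<rho> \<Longrightarrow> w \<in> subdiff f xb"
proof -
  let ?C = "subdiff f xb"
  obtain e where e: "e > 0" and sub: "ball 0 e \<inter> affine hull ?C \<subseteq> ?C" and C0: "0 \<in> ?C"
    using zero_rel_interior by (auto simp: mem_rel_interior_ball)
  have "par ?C \<subseteq> span ?C" unfolding par_def
    by (rule span_minimal) (auto intro: span_diff span_base)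
  moreover have "par ?C = normal_space M xb" using partly_smooth by (simp add: partly_smooth_at_def)
  ultimately have "normal_space M xb \<subseteq> affine hull ?C"
    using affine_hull_span_0[OF hull_inc[OF C0]] by simp
  then show ?thesis using sub e by (intro that[of "e / 2"]) auto
qed

lemma tangent_space_lower_semicontinuous:
  assumes zs: "\<And>n. zs n \<in> M" "zs \<longlonglongrightarrow> xb" and t: "t \<in> T xb"
  shows "\<exists>ts. (\<forall>\<^sub>F n in sequentially. ts n \<in> T (zs n)) \<and> ts \<longlonglongrightarrow> t"
proof -
  have evU: "\<forall>\<^sub>F n in sequentially. zs n \<in> U"
    using zs(2) open_U xb_U by (auto dest: topological_tendstoD)
  have "blinfun_apply (F' xb) t = 0" using t tangent_space_eq[OF xb_M xb_U] by simp
  then obtain ts where ev: "\<forall>\<^sub>F n in sequentially. blinfun_apply (F' (zs n)) (ts n) = 0"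
    and "ts \<longlonglongrightarrow> t"
    using kernel_lower_semicontinuous[OF xb_U zs(2)] by blast
  moreover have "\<forall>\<^sub>F n in sequentially. ts n \<in> T (zs n)"
    using ev evU by eventually_elim (use tangent_space_eq zs(1) in auto)
  ultimately show ?thesis by blast
qed

lemma limit_of_normals_is_normal:
  assumes zs: "\<And>n. zs n \<in> M" "zs \<longlonglongrightarrow> xb"
    and as: "\<And>n. \<forall>t\<in>T (zs n). as n \<bullet> t = 0" and l: "as \<longlonglongrightarrow> l"
  shows "l \<in> normal_space M xb"
  unfolding normal_space_def
proof (intro CollectI ballI)
  fix t assume "t \<in> T xb"
  then obtain ts where ts: "\<forall>\<^sub>F n in sequentially. ts n \<in> T (zs n)" and "ts \<longlonglongrightarrow> t"
    using tangent_space_lower_semicontinuous[OF zs] by blast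
  then have "(\<lambda>n. as n \<bullet> ts n) \<longlonglongrightarrow> l \<bullet> t" using l by (intro tendsto_inner)
  moreover have "\<forall>\<^sub>F n in sequentially. 0 = as n \<bullet> ts n"
    using ts by eventually_elim (use as in auto)
  then have "(\<lambda>n. as n \<bullet> ts n) \<longlonglongrightarrow> 0" by (rule Lim_transform_eventually[OF tendsto_const])
  ultimately show "l \<bullet> t = 0" by (rule LIMSEQ_unique)
qed

text \<open>All subgradients at \<open>z\<close> have the same tangential part \<open>\<nabla>\<^sub>M f(z)\<close>, so a hyperplane separating
  \<open>\<nabla>\<^sub>M f(z) + v\<close> from the closed convex set \<open>\<partial>f(z)\<close> can be taken with a normal unit vector.\<close>
lemma normal_separation_from_subdiff:
  assumes z: "z \<in> M" "z \<in> U" and v: "\<forall>t\<in>T z. v \<bullet> t = 0"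
    and notin: "riem_grad f M z + v \<notin> subdiff f z"
  obtains a where "norm a = 1" "\<forall>t\<in>T z. a \<bullet> t = 0" "\<forall>q\<in>subdiff f z. a \<bullet> q < norm v"
proof -
  let ?C = "subdiff f z" and ?u = "riem_grad f M z + v"
  have sub: "subspace (T z)" using subspace_tangent_space[OF z] .
  obtain a b where ab: "a \<bullet> ?u < b" "\<And>x. x \<in> ?C \<Longrightarrow> b < a \<bullet> x"
    using separating_hyperplane_closed_point[OF convex_convex_subdiff closed_convex_subdiff
        notin[unfolded subdiff_eq]]
    unfolding subdiff_eq by blast
  define n where "n = closest_point (T z) a - a"
  have nN: "n \<bullet> t = 0" if "t \<in> T z" for t
    using closest_point_subspace(2)[OF sub that, where a = a] by (simp add: n_def inner_diff_left)
  have pos: "n \<bullet> (?u - q) > 0" if q: "q \<in> ?C" for q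
  proof -
    have "(?u - q) \<bullet> t = 0" if "t \<in> T z" for t
      using inner_subgradient_tangent[OF z q that] v that by (simp add: inner_diff_left inner_add_left)
    then have "closest_point (T z) a \<bullet> (?u - q) = 0"
      using closest_point_subspace(1)[OF sub] by (simp add: inner_commute)
    then show ?thesis using ab(1) ab(2)[OF q] by (simp add: n_def inner_diff_left inner_diff_right)
  qed
  obtain q0 where q0: "q0 \<in> ?C" using subdiff_nonempty[OF z] by blast
  have n0: "n \<noteq> 0" using pos[OF q0] by auto
  define e where "e = n /\<^sub>R norm n"
  have e: "norm e = 1" "\<And>t. t \<in> T z \<Longrightarrow> e \<bullet> t = 0" using n0 nN by (auto simp: e_def)
  show ?thesis
  proof (rule that[OF e(1)])
    show "\<forall>t\<in>T z. e \<bullet> t = 0" using e(2) by blast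
    show "\<forall>q\<in>?C. e \<bullet> q < norm v"
    proof
      fix q assume q: "q \<in> ?C"
      have "e \<bullet> q < e \<bullet> ?u"
        using pos[OF q] n0 by (simp add: e_def inner_diff_right divide_strict_right_mono)
      also have "\<dots> = e \<bullet> v"
        using e(2)[OF riem_grad_in_tangent_space[OF z]] by (simp add: inner_add_right)
      also have "\<dots> \<le> norm v" using e(1) norm_cauchy_schwarz[of e v] by simp
      finally show "e \<bullet> q < norm v" .
    qed
  qed
qed

text \<open>If not, unit normals \<open>a\<^sub>n\<close> separating \<open>\<partial>f(z\<^sub>n)\<close> from \<open>\<nabla>\<^sub>M f(z\<^sub>n) + v\<^sub>n\<close> accumulate at a unit
  normal \<open>l\<close> at \<open>xb\<close>, and inner semicontinuity applied to \<open>\<rho> l \<in> \<partial>f(xb)\<close> yields \<open>\<rho> = l \<bullet> \<rho> l \<le> 0\<close>.\<close>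
lemma riem_grad_plus_vanishing_normal_in_subdiff:
  assumes zs: "\<And>n. zs n \<in> M" "\<And>n. zs n \<in> U" "zs \<longlonglongrightarrow> xb"
    and vs: "\<And>n. \<forall>t\<in>T (zs n). vs n \<bullet> t = 0" "vs \<longlonglongrightarrow> 0"
  shows "\<exists>n. riem_grad f M (zs n) + vs n \<in> subdiff f (zs n)"
proof (rule ccontr)
  assume "\<not> ?thesis"
  then have notin: "riem_grad f M (zs n) + vs n \<notin> subdiff f (zs n)" for n by blast
  have "\<exists>a. norm a = 1 \<and> (\<forall>t\<in>T (zs n). a \<bullet> t = 0) \<and> (\<forall>q\<in>subdiff f (zs n). a \<bullet> q < norm (vs n))"
    for n by (rule normal_separation_from_subdiff[OF zs(1,2) vs(1) notin]) blast
  then obtain as where as: "\<And>n. norm (as n) = 1" "\<And>n. \<forall>t\<in>T (zs n). as n \<bullet> t = 0"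
    "\<And>n. \<forall>q\<in>subdiff f (zs n). as n \<bullet> q < norm (vs n)"
    by metis
  have "\<forall>n. as n \<in> sphere 0 1" using as(1) by simp
  then obtain l \<sigma> where "l \<in> sphere 0 1" and \<sigma>: "strict_mono \<sigma>" and asl: "(as \<circ> \<sigma>) \<longlonglongrightarrow> l"
    by (rule seq_compactE[OF compact_imp_seq_compact[OF compact_sphere]])
  then have l: "norm l = 1" by simp
  have zt: "(zs \<circ> \<sigma>) \<longlonglongrightarrow> xb" using LIMSEQ_subseq_LIMSEQ[OF zs(3) \<sigma>] .
  have ztM: "(zs \<circ> \<sigma>) k \<in> M" for k using zs(1) by simp
  have "l \<in> normal_space M xb"
    using limit_of_normals_is_normal[OF ztM zt _ asl] as(2) by simp
  then have "\<rho> *\<^sub>R l \<in> normal_space M xb" for \<rho> by (simp add: normal_space_def)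
  obtain \<rho> where \<rho>: "\<rho> > 0"
    and \<rho>N: "\<And>w. w \<in> normal_space M xb \<Longrightarrow> norm w \<le> \<rho> \<Longrightarrow> w \<in> subdiff f xb"
    using small_normals_in_subdiff by blast
  have \<rho>l: "\<rho> *\<^sub>R l \<in> subdiff f xb" using \<rho>N[OF \<open>\<rho> *\<^sub>R l \<in> normal_space M xb\<close>] \<rho> l by simp
  have "\<forall>y\<in>subdiff f xb. \<forall>xs. (\<forall>r. xs r \<in> M) \<and> xs \<longlonglongrightarrow> xb \<longrightarrow>
      (\<exists>ys. (\<forall>\<^sub>F r in sequentially. ys r \<in> subdiff f (xs r)) \<and> ys \<longlonglongrightarrow> y)"
    using partly_smooth by (simp add: partly_smooth_at_def)
  then obtain qs where qs: "\<forall>\<^sub>F k in sequentially. qs k \<in> subdiff f ((zs \<circ> \<sigma>) k)"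
    and "qs \<longlonglongrightarrow> \<rho> *\<^sub>R l"
    using \<rho>l ztM zt by blast
  then have "(\<lambda>k. (as \<circ> \<sigma>) k \<bullet> qs k) \<longlonglongrightarrow> l \<bullet> (\<rho> *\<^sub>R l)" using asl by (intro tendsto_inner)
  moreover have "(\<lambda>k. norm ((vs \<circ> \<sigma>) k)) \<longlonglongrightarrow> 0"
    using LIMSEQ_subseq_LIMSEQ[OF vs(2) \<sigma>] by (rule tendsto_norm_zero)
  moreover have "\<forall>\<^sub>F k in sequentially. (as \<circ> \<sigma>) k \<bullet> qs k \<le> norm ((vs \<circ> \<sigma>) k)"
    using qs by eventually_elim (use as(3) in \<open>fastforce intro: less_imp_le\<close>)
  ultimately have "l \<bullet> (\<rho> *\<^sub>R l) \<le> 0" by (intro tendsto_le[of sequentially]) auto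
  moreover have "l \<bullet> (\<rho> *\<^sub>R l) = \<rho>" using l by (simp add: power2_norm_eq_inner[symmetric])
  ultimately show False using \<rho> by simp
qed

text \<open>A uniform version of \<open>0 \<in> ri \<partial>f(xb)\<close> along \<open>M\<close>.\<close>
lemma riem_grad_plus_small_normal_in_subdiff:
  obtains r \<delta> where "r > 0" "\<delta> > 0"
    "\<And>z v. z \<in> M \<Longrightarrow> dist z xb < \<delta> \<Longrightarrow> \<forall>t\<in>T z. v \<bullet> t = 0 \<Longrightarrow> norm v \<le> r \<Longrightarrow>
      riem_grad f M z + v \<in> subdiff f z"
proof -
  obtain dU where dU: "dU > 0" "ball xb dU \<subseteq> U" using open_U xb_U open_contains_ball by blast
  define \<epsilon> :: "nat \<Rightarrow> real" where "\<epsilon> n = inverse (real (Suc n))" for n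
  have \<epsilon>: "\<epsilon> n > 0" for n by (simp add: \<epsilon>_def)
  have \<epsilon>0: "\<epsilon> \<longlonglongrightarrow> 0" unfolding \<epsilon>_def by (rule LIMSEQ_inverse_real_of_nat)
  have "\<exists>n. \<forall>z v. z \<in> M \<and> dist z xb < min dU (\<epsilon> n) \<and> (\<forall>t\<in>T z. v \<bullet> t = 0) \<and> norm v \<le> \<epsilon> n
      \<longrightarrow> riem_grad f M z + v \<in> subdiff f z"
  proof (rule ccontr)
    assume "\<not> ?thesis"
    then obtain zs vs where zs: "\<And>n. zs n \<in> M" "\<And>n. dist (zs n) xb < min dU (\<epsilon> n)"
      and vs: "\<And>n. \<forall>t\<in>T (zs n). vs n \<bullet> t = 0" "\<And>n. norm (vs n) \<le> \<epsilon> n"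
      and notin: "\<And>n. riem_grad f M (zs n) + vs n \<notin> subdiff f (zs n)"
      by metis
    have zsU: "zs n \<in> U" for n using zs(2)[of n] dU by (auto simp: dist_commute)
    have "(\<lambda>n. zs n - xb) \<longlonglongrightarrow> 0"
      using zs(2) by (intro Lim_null_comparison[OF _ \<epsilon>0] always_eventually allI)
        (auto simp: dist_norm intro: less_imp_le)
    then have zlim: "zs \<longlonglongrightarrow> xb" by (rule LIM_zero_cancel)
    have "vs \<longlonglongrightarrow> 0"
      using vs(2) by (intro Lim_null_comparison[OF _ \<epsilon>0] always_eventually allI) auto
    from riem_grad_plus_vanishing_normal_in_subdiff[OF zs(1) zsU zlim vs(1) this] notin
    show False by blast
  qed
  then obtain n where "\<forall>z v. z \<in> M \<and> dist z xb < min dU (\<epsilon> n) \<and> (\<forall>t\<in>T z. v \<bullet> t = 0) \<and> norm v \<le> \<epsilon> n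
      \<longrightarrow> riem_grad f M z + v \<in> subdiff f z" ..
  then show ?thesis using dU \<epsilon>[of n] by (intro that[of "\<epsilon> n" "min dU (\<epsilon> n)"]) auto
qed

lemma compact_M_Int_cball:
  assumes "cball c d \<subseteq> U"
  shows "compact (M \<inter> cball c d)"
proof -
  have "continuous_on U F"
    using F_deriv by (intro has_derivative_continuous_on) (auto intro: has_derivative_at_withinI)
  then have "continuous_on (cball c d) F" using assms by (rule continuous_on_subset)
  then have "closed {y \<in> cball c d. F y = 0}" by (rule continuous_closed_preimage_constant) simp
  moreover have "M \<inter> cball c d = {y \<in> cball c d. F y = 0}" using M_chart assms by blast
  ultimately have "closed (M \<inter> cball c d)" by simp
  then show ?thesis unfolding compact_eq_bounded_closed using bounded_Int bounded_cball by blast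
qed

lemma growth_along_normal:
  assumes z: "z \<in> M" "z \<in> U" and xz: "x \<noteq> z" and normal: "\<forall>t\<in>T z. (x - z) \<bullet> t = 0"
    and sub: "riem_grad f M z + (r / norm (x - z)) *\<^sub>R (x - z) \<in> subdiff f z"
  shows "f z + ereal (r * norm (x - z)) \<le> f x"
proof -
  have "f z + ereal ((riem_grad f M z + (r / norm (x - z)) *\<^sub>R (x - z)) \<bullet> (x - z)) \<le> f x"
    using sub by (simp add: subdiff_eq convex_subdiff_def)
  moreover have "riem_grad f M z \<bullet> (x - z) = 0"
    using normal riem_grad_in_tangent_space[OF z] inner_commute by metis
  moreover have "((r / norm (x - z)) *\<^sub>R (x - z)) \<bullet> (x - z) = r * norm (x - z)"
    using xz by (simp add: power2_norm_eq_inner[symmetric] power2_eq_square)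
  ultimately show ?thesis by (simp add: inner_add_left)
qed

text \<open>Off \<open>M\<close>, \<open>f\<close> grows linearly away from the nearest point \<open>z\<close> of \<open>M\<close>: the vector \<open>x - z\<close> is normal
  at \<open>z\<close>, so \<open>\<nabla>\<^sub>M f(z) + r (x - z) / \<parallel>x - z\<parallel>\<close> is a subgradient at \<open>z\<close>.\<close>
lemma sharp_growth_from_M:
  obtains r \<delta> where "r > 0" "\<delta> > 0"
    "\<And>x. dist x xb < \<delta> \<Longrightarrow> \<exists>z\<in>M \<inter> U. dist z xb \<le> 2 * dist x xb \<and> norm (x - z) \<le> dist x xb \<and>
      f z + ereal (r * norm (x - z)) \<le> f x"
proof -
  obtain r \<delta>K where r: "r > 0" and \<delta>K: "\<delta>K > 0"
    and K: "\<And>z v. z \<in> M \<Longrightarrow> dist z xb < \<delta>K \<Longrightarrow> \<forall>t\<in>T z. v \<bullet> t = 0 \<Longrightarrow> norm v \<le> r \<Longrightarrow>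
      riem_grad f M z + v \<in> subdiff f z"
    by (rule riem_grad_plus_small_normal_in_subdiff) blast
  obtain \<rho> where \<rho>: "\<rho> > 0" "cball xb \<rho> \<subseteq> U" using open_U xb_U open_contains_cball by blast
  define C where "C = M \<inter> cball xb \<rho>"
  have clC: "closed C" using compact_M_Int_cball[OF \<rho>(2)] compact_imp_closed by (simp add: C_def)
  have xbC: "xb \<in> C" using xb_M \<rho>(1) by (simp add: C_def)
  have "\<exists>z\<in>M \<inter> U. dist z xb \<le> 2 * dist x xb \<and> norm (x - z) \<le> dist x xb
      \<and> f z + ereal (r * norm (x - z)) \<le> f x"
    if dx: "dist x xb < min (\<rho> / 2) (\<delta>K / 2)" for x
  proof (cases "x \<in> M")
    case True
    moreover have "x \<in> U" using dx \<rho> by (auto simp: dist_commute)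
    ultimately show ?thesis by (intro bexI[of _ x]) auto
  next
    case False
    define z where "z = closest_point C x"
    have zC: "z \<in> C" unfolding z_def using closest_point_in_set[OF clC] xbC by blast
    have zmin: "dist x z \<le> dist x u" if "u \<in> C" for u unfolding z_def by (rule closest_point_le[OF clC that])
    have dxz: "dist x z \<le> dist x xb" using zmin[OF xbC] .
    have dzxb: "dist z xb \<le> 2 * dist x xb"
      using dist_triangle[of z xb x] dxz by (simp add: dist_commute)
    have zM: "z \<in> M" using zC by (simp add: C_def)
    have zball: "z \<in> ball xb \<rho>" using dzxb dx by (simp add: dist_commute)
    have zU: "z \<in> U" using zball \<rho>(2) by auto
    have xz: "x \<noteq> z" using False zM by blast
    have normal: "\<forall>t\<in>T z. (x - z) \<bullet> t = 0"
      using zmin zM zball by (intro ballI nearest_point_orthogonal_tangent[OF zM open_ball zball])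
        (auto simp: C_def)
    have "riem_grad f M z + (r / norm (x - z)) *\<^sub>R (x - z) \<in> subdiff f z"
      using K[OF zM] normal dzxb dx xz r by simp
    from growth_along_normal[OF zM zU xz normal this]
    show ?thesis using zM zU dzxb dxz by (auto simp: dist_norm)
  qed
  then show ?thesis using r \<rho>(1) \<delta>K by (intro that[of r "min (\<rho> / 2) (\<delta>K / 2)"]) auto
qed

lemma argmin_locally_in_M:
  obtains \<delta> where "\<delta> > 0" "\<And>x. dist x xb < \<delta> \<Longrightarrow> x \<in> S \<Longrightarrow> x \<in> M"
proof -
  obtain r \<delta> where r: "r > 0" and "\<delta> > 0" and growth: "\<And>x. dist x xb < \<delta> \<Longrightarrow>
      \<exists>z\<in>M \<inter> U. f z + ereal (r * norm (x - z)) \<le> f x"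
    using sharp_growth_from_M by metis
  have "x \<in> M" if dx: "dist x xb < \<delta>" and xS: "x \<in> S" for x
  proof (rule ccontr)
    assume "x \<notin> M"
    obtain z where z: "z \<in> M" "z \<in> U" "f z + ereal (r * norm (x - z)) \<le> f x"
      using growth dx by blast
    then have "g z + r * norm (x - z) \<le> g xb" using f_eq_g[OF z(1,2)] f_argmin[OF xS] by simp
    moreover have "x \<noteq> z" using z(1) \<open>x \<notin> M\<close> by blast
    then have "r * norm (x - z) > 0" using r by simp
    ultimately show False using g_xb_le[OF z(1,2)] by simp
  qed
  then show ?thesis using \<open>\<delta> > 0\<close> that by blast
qed

lemma riem_error_bound_if_error_bound:
  assumes "\<exists>e>0. \<exists>\<mu>>0. \<forall>x\<in>ball xb e. subdiff f x \<noteq> {} \<longrightarrow> \<mu> * infdist x S \<le> infdist 0 (subdiff f x)"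
  shows "\<exists>e>0. \<exists>\<mu>>0. \<forall>x\<in>ball xb e \<inter> M. \<mu> * infdist x (S \<inter> M) \<le> norm (riem_grad f M x)"
proof -
  obtain e1 \<mu> where e1: "e1 > 0" and \<mu>: "\<mu> > 0"
    and bound: "\<And>x. x \<in> ball xb e1 \<Longrightarrow> subdiff f x \<noteq> {} \<Longrightarrow> \<mu> * infdist x S \<le> infdist 0 (subdiff f x)"
    using assms by blast
  obtain r \<delta>K where r: "r > 0" and \<delta>K: "\<delta>K > 0"
    and K: "\<And>z v. z \<in> M \<Longrightarrow> dist z xb < \<delta>K \<Longrightarrow> \<forall>t\<in>T z. v \<bullet> t = 0 \<Longrightarrow> norm v \<le> r \<Longrightarrow>
      riem_grad f M z + v \<in> subdiff f z"
    by (rule riem_grad_plus_small_normal_in_subdiff) blast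
  obtain \<delta>i where \<delta>i: "\<delta>i > 0" and SM: "\<And>x. dist x xb < \<delta>i \<Longrightarrow> x \<in> S \<Longrightarrow> x \<in> M"
    using argmin_locally_in_M by blast
  define e where "e = min e1 (min \<delta>K (\<delta>i / 2))"
  have "\<mu> * infdist x (S \<inter> M) \<le> norm (riem_grad f M x)" if x: "x \<in> ball xb e \<inter> M" for x
  proof -
    have xM: "x \<in> M" and dx: "dist x xb < e" using x by (auto simp: dist_commute)
    have rg: "riem_grad f M x \<in> subdiff f x" using K[of x 0] xM dx r by (simp add: e_def)
    obtain p where pS: "p \<in> S" and dp: "infdist x S = dist x p"
      using infdist_attains_inf[OF closed_argmin] xb_argmin by blast
    have "dist x p \<le> dist x xb" using infdist_le[OF xb_argmin, of x] dp by simp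
    then have "dist p xb < \<delta>i" using dist_triangle[of p xb x] dx by (simp add: e_def dist_commute)
    then have "p \<in> S \<inter> M" using SM pS by blast
    then have "\<mu> * infdist x (S \<inter> M) \<le> \<mu> * infdist x S" using infdist_le[of p] dp \<mu> by simp
    also have "\<dots> \<le> infdist 0 (subdiff f x)" using bound rg dx by (auto simp: e_def dist_commute)
    also have "\<dots> \<le> norm (riem_grad f M x)" using infdist_le[OF rg, of 0] by simp
    finally show ?thesis .
  qed
  then show ?thesis using e1 \<delta>K \<delta>i \<mu> by (intro exI[of _ e] exI[of _ \<mu>]) (auto simp: e_def)
qed

text \<open>\<open>y\<close> minimizes \<open>g + \<mu> \<parallel>\<cdot> - x\<parallel>\<^sup>2\<close> over the compact set \<open>M \<inter> cball x d\<close>; inside the ball Fermat's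
  rule applies.\<close>
lemma proximal_point_on_M:
  assumes x: "x \<in> M" and d: "d > 0" "cball x d \<subseteq> U" and \<mu>: "\<mu> \<ge> 0"
  obtains y where "y \<in> M" "y \<in> U" "dist y x \<le> d" "g y + \<mu> * (dist y x)\<^sup>2 \<le> g x"
    "dist y x < d \<Longrightarrow> norm (riem_grad f M y) \<le> 2 * \<mu> * dist y x"
proof -
  define C where "C = M \<inter> cball x d"
  have C: "compact C" "x \<in> C" "C \<subseteq> U"
    using compact_M_Int_cball[OF d(2)] x d by (auto simp: C_def)
  have "continuous_on C (\<lambda>y. g y + \<mu> * (norm (y - x))\<^sup>2)"
    by (intro continuous_intros continuous_on_subset[OF continuous_on_g C(3)])
  then obtain y where yC: "y \<in> C"
    and ymin: "\<And>u. u \<in> C \<Longrightarrow> g y + \<mu> * (norm (y - x))\<^sup>2 \<le> g u + \<mu> * (norm (u - x))\<^sup>2"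
    using continuous_attains_inf[OF C(1)] C(2) by blast
  have y: "y \<in> M" "y \<in> U" "dist y x \<le> d" using yC C(3) by (auto simp: C_def dist_commute)
  show ?thesis
  proof (rule that[OF y])
    show "g y + \<mu> * (dist y x)\<^sup>2 \<le> g x" using ymin[OF C(2)] by (simp add: dist_norm)
    assume "dist y x < d"
    then have "y \<in> ball x d" by (simp add: dist_commute)
    moreover have "\<forall>u\<in>M \<inter> ball x d. g y + \<mu> * (norm (y - x))\<^sup>2 \<le> g u + \<mu> * (norm (u - x))\<^sup>2"
      using ymin by (auto simp: C_def)
    ultimately show "norm (riem_grad f M y) \<le> 2 * \<mu> * dist y x"
      using norm_riem_grad_le_at_proximal_min[OF y(1,2) open_ball _ \<mu>] by (simp add: dist_norm)
  qed
qed

text \<open>If \<open>y\<close> is the proximal point of \<open>x\<close> with \<open>d = dist(x, S \<inter> M)\<close>, then \<open>d \<le> 3 \<parallel>y - x\<parallel>\<close>: either \<open>y\<close> lies on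
  the sphere, or the Riemannian error bound at \<open>y\<close> gives \<open>dist(y, S \<inter> M) \<le> 2 \<parallel>y - x\<parallel>\<close>.\<close>
lemma quadratic_growth_at_point_of_M:
  assumes bound: "\<And>y. y \<in> M \<Longrightarrow> dist y xb < e \<Longrightarrow> \<mu> * infdist y (S \<inter> M) \<le> norm (riem_grad f M y)"
    and \<mu>: "\<mu> > 0" and xM: "x \<in> M" and dx: "2 * dist x xb < e" and ball: "cball x (dist x xb) \<subseteq> U"
  shows "g xb + \<mu> / 9 * (infdist x (S \<inter> M))\<^sup>2 \<le> g x"
proof -
  define d where "d = infdist x (S \<inter> M)"
  have dle: "d \<le> dist x xb" unfolding d_def using xb_argmin xb_M by (intro infdist_le) auto
  have xU: "x \<in> U" using ball by auto
  show ?thesis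
  proof (cases "d = 0")
    case True
    then show ?thesis using g_xb_le[OF xM xU] by (simp add: d_def)
  next
    case False
    then have d: "d > 0" using infdist_nonneg[of x "S \<inter> M"] by (simp add: d_def)
    have "cball x d \<subseteq> U" using ball dle by auto
    then obtain y where y: "y \<in> M" "y \<in> U" "dist y x \<le> d" "g y + \<mu> * (dist y x)\<^sup>2 \<le> g x"
      and grad: "dist y x < d \<Longrightarrow> norm (riem_grad f M y) \<le> 2 * \<mu> * dist y x"
      using proximal_point_on_M[OF xM d] \<mu> by (metis less_imp_le)
    have "d \<le> 3 * dist y x"
    proof (cases "dist y x < d")
      case True
      have "dist y xb < e" using dist_triangle[of y xb x] y(3) dle dx by simp
      then have "\<mu> * infdist y (S \<inter> M) \<le> 2 * \<mu> * dist y x" using bound[OF y(1)] grad[OF True] by simp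
      then have "infdist y (S \<inter> M) \<le> 2 * dist y x" using \<mu> by simp
      moreover have "d \<le> infdist y (S \<inter> M) + dist x y" unfolding d_def by (rule infdist_triangle)
      ultimately show ?thesis by (simp add: dist_commute)
    qed (use y(3) d in simp)
    then have "d\<^sup>2 \<le> 9 * (dist y x)\<^sup>2" using d power_mono[of d "3 * dist y x" 2] by simp
    then have "\<mu> / 9 * d\<^sup>2 \<le> \<mu> * (dist y x)\<^sup>2" using \<mu> by simp
    then show ?thesis using y(4) g_xb_le[OF y(1,2)] by (simp add: d_def)
  qed
qed

lemma quadratic_growth_on_M_if_riem_error_bound:
  assumes "\<exists>e>0. \<exists>\<mu>>0. \<forall>x\<in>ball xb e \<inter> M. \<mu> * infdist x (S \<inter> M) \<le> norm (riem_grad f M x)"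
  obtains c \<delta> where "c > 0" "\<delta> > 0"
    "\<And>x. x \<in> M \<Longrightarrow> dist x xb < \<delta> \<Longrightarrow> g xb + c * (infdist x (S \<inter> M))\<^sup>2 \<le> g x"
proof -
  obtain e \<mu> where e: "e > 0" and \<mu>: "\<mu> > 0"
    and bound: "\<And>y. y \<in> M \<Longrightarrow> dist y xb < e \<Longrightarrow> \<mu> * infdist y (S \<inter> M) \<le> norm (riem_grad f M y)"
    using assms by (auto simp: dist_commute)
  obtain \<rho> where \<rho>: "\<rho> > 0" "cball xb \<rho> \<subseteq> U" using open_U xb_U open_contains_cball by blast
  have "cball x (dist x xb) \<subseteq> U" if "dist x xb < \<rho> / 2" for x
  proof
    fix y assume "y \<in> cball x (dist x xb)"
    then have "dist xb y \<le> \<rho>" using dist_triangle[of xb y x] that by (simp add: dist_commute)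
    then show "y \<in> U" using \<rho>(2) by auto
  qed
  then show ?thesis
    using quadratic_growth_at_point_of_M[OF bound \<mu>] \<mu> \<rho>(1) e
    by (intro that[of "\<mu> / 9" "min (\<rho> / 2) (e / 2)"]) auto
qed

text \<open>Quadratic growth on \<open>M\<close> extends to a neighbourhood of \<open>xb\<close> because \<open>f\<close> grows linearly
  away from \<open>M\<close>, and linear growth dominates quadratic growth near \<open>M\<close>.\<close>
lemma quadratic_growth_if_riem_error_bound:
  assumes "\<exists>e>0. \<exists>\<mu>>0. \<forall>x\<in>ball xb e \<inter> M. \<mu> * infdist x (S \<inter> M) \<le> norm (riem_grad f M x)"
  obtains c \<delta> where "c > 0" "\<delta> > 0" "\<And>x. dist x xb < \<delta> \<Longrightarrow> ereal (g xb + c * (infdist x S)\<^sup>2) \<le> f x"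
proof -
  obtain c \<delta> where c: "c > 0" and \<delta>: "\<delta> > 0"
    and growth_M: "\<And>x. x \<in> M \<Longrightarrow> dist x xb < \<delta> \<Longrightarrow> g xb + c * (infdist x (S \<inter> M))\<^sup>2 \<le> g x"
    using quadratic_growth_on_M_if_riem_error_bound[OF assms] by blast
  obtain r \<delta>' where r: "r > 0" and \<delta>': "\<delta>' > 0"
    and near: "\<And>x. dist x xb < \<delta>' \<Longrightarrow> \<exists>z\<in>M \<inter> U. dist z xb \<le> 2 * dist x xb \<and>
      norm (x - z) \<le> dist x xb \<and> f z + ereal (r * norm (x - z)) \<le> f x"
    using sharp_growth_from_M by blast
  have SM: "S \<inter> M \<noteq> {}" using xb_argmin xb_M by blast
  have "ereal (g xb + min c r / 2 * (infdist x S)\<^sup>2) \<le> f x"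
    if dx: "dist x xb < min (\<delta> / 2) (min \<delta>' 1)" for x
  proof -
    obtain z where z: "z \<in> M" "z \<in> U" "dist z xb \<le> 2 * dist x xb" "norm (x - z) \<le> dist x xb"
      and fz: "f z + ereal (r * norm (x - z)) \<le> f x"
      using near[of x] dx by auto
    define a where "a = infdist z (S \<inter> M)"
    define b where "b = norm (x - z)"
    have "infdist x S \<le> infdist x (S \<inter> M)" by (rule infdist_mono[OF _ SM]) auto
    also have "\<dots> \<le> a + b" using infdist_triangle[of x "S \<inter> M" z] by (simp add: a_def b_def dist_norm)
    finally have "(infdist x S)\<^sup>2 \<le> (a + b)\<^sup>2" by (intro power_mono) (auto simp: infdist_nonneg)
    then have "min c r / 2 * (infdist x S)\<^sup>2 \<le> min c r / 2 * (a + b)\<^sup>2"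
      using c r by (intro mult_left_mono) auto
    also have "\<dots> \<le> c * a\<^sup>2 + r * b"
      using z(4) dx c r by (intro min_half_square_sum_le) (auto simp: a_def b_def infdist_nonneg)
    finally have "min c r / 2 * (infdist x S)\<^sup>2 \<le> c * a\<^sup>2 + r * b" .
    moreover have "g xb + c * a\<^sup>2 \<le> g z" using growth_M[OF z(1)] z(3) dx by (simp add: a_def)
    ultimately have "g xb + min c r / 2 * (infdist x S)\<^sup>2 \<le> g z + r * b" by simp
    also have "ereal (g z + r * b) \<le> f x" using fz f_eq_g[OF z(1,2)] by (simp add: b_def)
    finally show ?thesis by simp
  qed
  then show ?thesis using c r \<delta> \<delta>' by (intro that[of "min c r / 2" "min (\<delta> / 2) (min \<delta>' 1)"]) auto
qed

text \<open>For convex \<open>f\<close>, quadratic growth gives the error bound: for \<open>q \<in> \<partial>f(x)\<close> and the projection \<open>p\<close>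
  of \<open>x\<close> onto \<open>S\<close>, \<open>c d\<^sup>2 \<le> f x - f p \<le> q \<bullet> (x - p) \<le> \<parallel>q\<parallel> d\<close>.\<close>
lemma error_bound_if_quadratic_growth:
  assumes c: "c > 0" and growth: "\<And>x. dist x xb < \<delta> \<Longrightarrow> ereal (g xb + c * (infdist x S)\<^sup>2) \<le> f x"
  shows "\<forall>x\<in>ball xb \<delta>. subdiff f x \<noteq> {} \<longrightarrow> c * infdist x S \<le> infdist 0 (subdiff f x)"
proof (intro ballI impI)
  fix x assume x: "x \<in> ball xb \<delta>" and ne: "subdiff f x \<noteq> {}"
  define D where "D = infdist x S"
  obtain p where pS: "p \<in> S" and dp: "D = dist x p"
    using infdist_attains_inf[OF closed_argmin] xb_argmin unfolding D_def by blast
  have "c * D \<le> norm q" if q: "q \<in> subdiff f x" for q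
  proof -
    have "f x + ereal (q \<bullet> (p - x)) \<le> f p" and "\<bar>f x\<bar> \<noteq> \<infinity>"
      using q by (simp_all add: subdiff_eq convex_subdiff_def)
    then obtain fx where fx: "f x = ereal fx" "fx + q \<bullet> (p - x) \<le> g xb"
      using f_argmin[OF pS] by (cases "f x") auto
    have "g xb + c * D\<^sup>2 \<le> fx" using growth[of x] x fx(1) by (simp add: D_def dist_commute)
    then have "c * D\<^sup>2 \<le> - (q \<bullet> (p - x))" using fx(2) by simp
    also have "\<dots> \<le> norm q * D"
      using Cauchy_Schwarz_ineq2[of q "p - x"] dp by (simp add: dist_norm norm_minus_commute abs_le_iff)
    finally have "(c * D) * D \<le> norm q * D" by (simp add: power2_eq_square mult.assoc)
    then show ?thesis
      using dp by (cases "D = 0") (auto dest: mult_right_le_imp_le)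
  qed
  then have "c * D \<le> (INF q\<in>subdiff f x. dist 0 q)" by (intro cINF_greatest[OF ne]) simp
  then show "c * infdist x S \<le> infdist 0 (subdiff f x)" using ne by (simp add: infdist_def D_def)
qed

lemma error_bound_iff_riem_error_bound:
  "(\<exists>e>0. \<exists>\<mu>>0. \<forall>x\<in>ball xb e. subdiff f x \<noteq> {} \<longrightarrow> \<mu> * infdist x S \<le> infdist 0 (subdiff f x))
   \<longleftrightarrow> (\<exists>e>0. \<exists>\<mu>>0. \<forall>x\<in>ball xb e \<inter> M. \<mu> * infdist x (S \<inter> M) \<le> norm (riem_grad f M x))"
proof
  assume "\<exists>e>0. \<exists>\<mu>>0. \<forall>x\<in>ball xb e \<inter> M. \<mu> * infdist x (S \<inter> M) \<le> norm (riem_grad f M x)"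
  then obtain c \<delta> where "c > 0" "\<delta> > 0"
    and "\<And>x. dist x xb < \<delta> \<Longrightarrow> ereal (g xb + c * (infdist x S)\<^sup>2) \<le> f x"
    by (rule quadratic_growth_if_riem_error_bound) blast
  then show "\<exists>e>0. \<exists>\<mu>>0. \<forall>x\<in>ball xb e. subdiff f x \<noteq> {} \<longrightarrow> \<mu> * infdist x S \<le> infdist 0 (subdiff f x)"
    using error_bound_if_quadratic_growth by blast
qed (rule riem_error_bound_if_error_bound)

end

lemma submersion_chart_subset:
  assumes "submersion_chart U L F F'" "open V" "V \<subseteq> U"
  shows "submersion_chart V L F F'"
  using assms unfolding submersion_chart_def by (auto intro: continuous_on_subset)

lemma local_smooth_ext_subset:
  assumes "local_smooth_ext f M x U g g'" "open V" "x \<in> V" "V \<subseteq> U"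
  shows "local_smooth_ext f M x V g g'"
  using assms unfolding local_smooth_ext_def C1_on_with_grad_def by (auto intro: continuous_on_subset)

lemma partly_smooth_minimizer_exists:
  assumes "proper_fun f" "closed_fun f" "convex_fun f" "xb \<in> argmin_set f"
    and "C1_submanifold M" "xb \<in> M" "C1_partly_smooth_around f M xb"
    and "0 \<in> rel_interior (subdiff f xb)"
  obtains U L F F' g g' where "partly_smooth_minimizer U L F F' f M xb g g'"
proof -
  have ps: "partly_smooth_at f M xb" using assms(6,7) by (auto simp: C1_partly_smooth_around_def)
  then obtain r where r: "r > 0" and nonempty: "\<And>z. z \<in> M \<Longrightarrow> dist z xb < r \<Longrightarrow> subdiff f z \<noteq> {}"
    unfolding partly_smooth_at_def by blast
  obtain U1 g g' where ext: "local_smooth_ext f M xb U1 g g'"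
    using ps unfolding partly_smooth_at_def restricted_C1_def by blast
  have "\<forall>z\<in>M. \<exists>U L (F::'a \<Rightarrow> 'a) (F'::'a \<Rightarrow> 'a \<Rightarrow>\<^sub>L 'a). open U \<and> z \<in> U \<and> subspace L \<and>
     (\<forall>y\<in>U. F y \<in> L \<and> (F has_derivative blinfun_apply (F' y)) (at y) \<and> range (blinfun_apply (F' y)) = L) \<and>
     continuous_on U F' \<and> M \<inter> U = {y\<in>U. F y = 0}"
    using assms(5) unfolding C1_submanifold_def .
  from bspec[OF this assms(6)] obtain U0 L and F :: "'a \<Rightarrow> 'a" and F' where "open U0" "xb \<in> U0"
    "\<forall>y\<in>U0. F y \<in> L \<and> (F has_derivative blinfun_apply (F' y)) (at y) \<and>
      range (blinfun_apply (F' y)) = L"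
    and "continuous_on U0 F'" and MU0: "M \<inter> U0 = {y\<in>U0. F y = 0}"
    by blast
  then have chart: "submersion_chart U0 L F F'" by unfold_locales auto
  define U where "U = U0 \<inter> U1 \<inter> ball xb r"
  have U: "open U" "xb \<in> U" "U \<subseteq> U0" "U \<subseteq> U1"
    using \<open>open U0\<close> \<open>xb \<in> U0\<close> ext r by (auto simp: U_def local_smooth_ext_def)
  have "partly_smooth_minimizer U L F F' f M xb g g'"
  proof (rule partly_smooth_minimizer.intro[OF submersion_chart_subset[OF chart U(1,3)]], unfold_locales)
    show "M \<inter> U = {y \<in> U. F y = 0}" using MU0 U(3) by auto
    show "local_smooth_ext f M xb U g g'" using local_smooth_ext_subset[OF ext U(1,2,4)] .
    show "\<And>z. z \<in> M \<Longrightarrow> z \<in> U \<Longrightarrow> subdiff f z \<noteq> {}"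
      using nonempty by (auto simp: U_def dist_commute)
  qed (use assms ps U(2) in auto)
  then show ?thesis by (rule that)
qed

theorem theorem4:
  fixes f :: "'a::euclidean_space \<Rightarrow> ereal" and M :: "'a set" and xb :: 'a
  assumes "proper_fun f" and "closed_fun f" and "convex_fun f"
    and "argmin_set f \<noteq> {}"
    and "xb \<in> argmin_set f"
    and "C1_submanifold M" and "xb \<in> M"
    and "C1_partly_smooth_around f M xb"
    and "0 \<in> rel_interior (subdiff f xb)"
  shows "(\<exists>e>0. \<exists>\<mu>>0. \<forall>x\<in>ball xb e.
             subdiff f x \<noteq> {} \<longrightarrow> \<mu> * infdist x (argmin_set f) \<le> infdist 0 (subdiff f x))
     \<longleftrightarrow>
         (\<exists>e>0. \<exists>\<mu>>0. \<forall>x\<in>ball xb e \<inter> M.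
             \<mu> * infdist x (argmin_set f \<inter> M) \<le> norm (riem_grad f M x))"
proof -
  \<comment> \<open>\<open>assms(4)\<close> is redundant, being implied by \<open>assms(5)\<close>.\<close>
  obtain U L F F' g g' where "partly_smooth_minimizer U L F F' f M xb g g'"
    using partly_smooth_minimizer_exists[OF assms(1-3,5-9)] .
  then show ?thesis by (rule partly_smooth_minimizer.error_bound_iff_riem_error_bound)
qed

end
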